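(* Let $\{a_i,\ell_i,\gamma_i\}$ be a configuration and $a\in\mathbb R^2$ a point. Then exactly one of the following holds: (i) $a$ is non-constructible from the configuration; (ii) for every choice of four points $c_1,c_2,c_3,c_4\in\mathbb R^2$ in general position, the general algorithm started from the configuration and $c_1,\dots,c_4$ constructs $a$, i.e., $a\in S_k$ for some $k$.
   Context: A configuration is a finite collection of points $a_i\in\mathbb R^2$, lines $\ell_i\subset\mathbb R^2$ and curves $\gamma_i\subset\mathbb R^2$. Given a configuration $\{a_i,\ell_i,\gamma_i\}$, call a set $\Sigma\subset\mathbb R^2$ admissible if: (1) $\Sigma$ is dense in $\mathbb R^2$; (2) every $a_i$ lies in $\Sigma$; (3) for any $b_1,b_2,b_3,b_4\in\Sigma$ with $b_1\neq b_2$, $b_3\ne b_4$, if the lines $b_1b_2$ and $b_3b_4$ are distinct and not parallel, then their intersection point lies in $\Sigma$; (4) for any distinct $b_1,b_2\in\Sigma$, every isolated intersection point of the line $b_1b_2$ with any of the lines $\ell_i$ or curves $\gamma_j$ lies in $\Sigma$. A point $a$ is non-constructible from the configuration if there exists an admissible set $\Sigma$ with $a\notin\Sigma$. Four points $c_1,\dots,c_4$ are in general position if no three of them are collinear and no two of the six lines $c_jc_k$ are parallel. The general algorithm: set $S_0=\{a_i\}\cup\{c_1,c_2,c_3,c_4\}$ and $L_0=\{\ell_i\}$; given $S_k,L_k$, let $L_{k+1}=L_k\cup\{\text{lines through two distinct points of } S_k\}$ and let $S_{k+1}$ be $S_k$ together with all intersection points of pairs of distinct non-parallel lines in $L_{k+1}$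 and all isolated intersection points of lines in $L_{k+1}$ with the curves $\gamma_j$. The algorithm constructs $a$ if $a\in S_k$ for some $k$. *)

theory Defs
  imports "HOL-Analysis.Analysis"
begin

type_synonym pt = "real \<times> real"

definition line_through :: "pt \<Rightarrow> pt \<Rightarrow> pt set" where
  "line_through p q = {p + t *\<^sub>R (q - p) | t. True}"

definition is_line :: "pt set \<Rightarrow> bool" where
  "is_line L \<longleftrightarrow> (\<exists>p q. p \<noteq> q \<and> L = line_through p q)"

text \<open>Two lines are parallel if one is a translate of the other (equal lines count as parallel).\<close>
definition parallel :: "pt set \<Rightarrow> pt set \<Rightarrow> bool" where
  "parallel L1 L2 \<longleftrightarrow> (\<exists>v. L2 = (\<lambda>x. x + v) ` L1)"

definition admissible :: "pt set \<Rightarrow> pt set set \<Rightarrow> pt set set \<Rightarrow> pt set \<Rightarrow> bool" where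
  "admissible A Ls Gs \<Sigma> \<longleftrightarrow>
     closure \<Sigma> = UNIV \<and>
     A \<subseteq> \<Sigma> \<and>
     (\<forall>b1\<in>\<Sigma>. \<forall>b2\<in>\<Sigma>. \<forall>b3\<in>\<Sigma>. \<forall>b4\<in>\<Sigma>. \<forall>x.
        b1 \<noteq> b2 \<and> b3 \<noteq> b4 \<and> line_through b1 b2 \<noteq> line_through b3 b4 \<and>
        \<not> parallel (line_through b1 b2) (line_through b3 b4) \<and>
        x \<in> line_through b1 b2 \<inter> line_through b3 b4 \<longrightarrow> x \<in> \<Sigma>) \<and>
     (\<forall>b1\<in>\<Sigma>. \<forall>b2\<in>\<Sigma>. \<forall>x. b1 \<noteq> b2 \<longrightarrow>
        (\<forall>L\<in>Ls. x isolated_in (line_through b1 b2 \<inter> L) \<longrightarrow> x \<in> \<Sigma>) \<and>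
        (\<forall>g\<in>Gs. x isolated_in (line_through b1 b2 \<inter> g) \<longrightarrow> x \<in> \<Sigma>))"

definition non_constructible :: "pt set \<Rightarrow> pt set set \<Rightarrow> pt set set \<Rightarrow> pt \<Rightarrow> bool" where
  "non_constructible A Ls Gs a \<longleftrightarrow> (\<exists>\<Sigma>. admissible A Ls Gs \<Sigma> \<and> a \<notin> \<Sigma>)"

definition general_position :: "(nat \<Rightarrow> pt) \<Rightarrow> bool" where
  "general_position c \<longleftrightarrow>
     inj_on c {..<4} \<and>
     (\<forall>i<4. \<forall>j<4. \<forall>k<4. i \<noteq> j \<and> j \<noteq> k \<and> i \<noteq> k \<longrightarrow> \<not> collinear {c i, c j, c k}) \<and>
     (\<forall>i<4. \<forall>j<4. \<forall>k<4. \<forall>l<4. i \<noteq> j \<and> k \<noteq> l \<and> {i, j} \<noteq> {k, l} \<longrightarrow>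
        \<not> parallel (line_through (c i) (c j)) (line_through (c k) (c l)))"

text \<open>The general algorithm: alg A Ls Gs c k = (S_k, L_k).\<close>
fun alg :: "pt set \<Rightarrow> pt set set \<Rightarrow> pt set set \<Rightarrow> (nat \<Rightarrow> pt) \<Rightarrow> nat \<Rightarrow> pt set \<times> pt set set" where
  "alg A Ls Gs c 0 = (A \<union> c ` {..<4}, Ls)"
| "alg A Ls Gs c (Suc k) =
     (let S = fst (alg A Ls Gs c k);
          L' = snd (alg A Ls Gs c k) \<union> {line_through p q | p q. p \<in> S \<and> q \<in> S \<and> p \<noteq> q}
      in (S \<union> {x. \<exists>L1\<in>L'. \<exists>L2\<in>L'. L1 \<noteq> L2 \<and> \<not> parallel L1 L2 \<and> x \<in> L1 \<inter> L2}
            \<union> {x. \<exists>L1\<in>L'. \<exists>g\<in>Gs. x isolated_in (L1 \<inter> g)},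
          L'))"

end

theory Submission
  imports Defs
begin

(*
  If an admissible set omits a, it is dense and therefore contains four points in general
  position.  Running the algorithm from them, induction shows that every constructed point lies in
  the admissible set and every constructed line is spanned by two of its points; a given line is
  spanned by two of its isolated intersections with such lines.

  Conversely, for c in general position the union of all S_k is closed under every operation of
  admissibility, and only its density needs proof.  Its closure E is closed and closed under
  intersections of non-parallel lines.  In projective coordinates in which the four points form
  a frame with all frame points on one side of the line sent to infinity, intersections produce
  every positive integer point; closedness gives the open cone of positive points, and every
  other point is the intersection of two lines through that cone.  So E is the whole plane.
*)

section \<open>Lines in the plane\<close>

definition det2 :: "pt \<Rightarrow> pt \<Rightarrow> real" where
  "det2 u v = fst u * snd v - snd u * fst v"

lemma det2_add_scaleR_left: "det2 (a + t *\<^sub>R b) c = det2 a c + t * det2 b c"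
  by (simp add: det2_def algebra_simps)

lemma det2_scaleR_left: "det2 (t *\<^sub>R a) c = t * det2 a c"
  by (simp add: det2_def algebra_simps)

lemma det2_self [simp]: "det2 a a = 0"
  by (simp add: det2_def)

lemma det2_zero [simp]: "det2 0 a = 0" "det2 a 0 = 0"
  by (simp_all add: det2_def)

lemma det2_commute: "det2 a b = - det2 b a"
  by (simp add: det2_def)

lemma det2_linear_combinations:
  "det2 (a *\<^sub>R u + b *\<^sub>R v) (c *\<^sub>R u + d *\<^sub>R v) = (a * d - b * c) * det2 u v"
  by (simp add: det2_def algebra_simps)

lemma tendsto_det2 [tendsto_intros]:
  "(f \<longlongrightarrow> a) F \<Longrightarrow> (g \<longlongrightarrow> b) F \<Longrightarrow> ((\<lambda>n. det2 (f n) (g n)) \<longlongrightarrow> det2 a b) F"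
  unfolding det2_def by (intro tendsto_intros)

lemma det2_eq_0_imp_multiple:
  assumes "u \<noteq> 0" "det2 u w = 0"
  obtains k where "w = k *\<^sub>R u"
proof (cases "fst u = 0")
  case True
  then have "snd u \<noteq> 0" using assms(1) by (simp add: prod_eq_iff)
  then show ?thesis using assms True
    by (intro that[of "snd w / snd u"]) (auto simp: prod_eq_iff det2_def field_simps)
next
  case False
  then show ?thesis using assms
    by (intro that[of "fst w / fst u"]) (auto simp: prod_eq_iff det2_def field_simps)
qed

lemma det2_eq_0_iff_multiple:
  assumes "u \<noteq> 0"
  shows "det2 w u = 0 \<longleftrightarrow> (\<exists>k. w = k *\<^sub>R u)"
  using det2_eq_0_imp_multiple[OF assms, of w] det2_commute[of w u]
  by (auto simp: det2_scaleR_left)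

lemma det2_same_direction:
  assumes "u \<noteq> 0" "w \<noteq> 0" "det2 u w = 0"
  shows "det2 a u = 0 \<longleftrightarrow> det2 a w = 0"
proof -
  obtain k where k: "w = k *\<^sub>R u" using det2_eq_0_imp_multiple assms by blast
  then have "k \<noteq> 0" using assms by auto
  with k show ?thesis by (simp add: det2_def)
qed

lemma mem_line_through_iff:
  assumes "p \<noteq> q"
  shows "x \<in> line_through p q \<longleftrightarrow> det2 (x - p) (q - p) = 0"
proof -
  have "x \<in> line_through p q \<longleftrightarrow> (\<exists>t. x - p = t *\<^sub>R (q - p))"
    by (auto simp: line_through_def algebra_simps)
  then show ?thesis using det2_eq_0_iff_multiple[of "q - p" "x - p"] assms by simp
qed

lemma line_through_eqI:
  assumes "p \<noteq> q" "x1 \<noteq> x2" "x1 \<in> line_through p q" "x2 \<in> line_through p q"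
  shows "line_through x1 x2 = line_through p q"
proof (rule set_eqI)
  fix y
  have on: "det2 (x1 - p) (q - p) = 0" "det2 (x2 - p) (q - p) = 0"
    using assms mem_line_through_iff by auto
  then have dir: "det2 (x2 - x1) (q - p) = 0" by (simp add: det2_def algebra_simps)
  have "y \<in> line_through x1 x2 \<longleftrightarrow> det2 (y - x1) (x2 - x1) = 0"
    using mem_line_through_iff[OF assms(2)] .
  also have "\<dots> \<longleftrightarrow> det2 (y - x1) (q - p) = 0"
    using det2_same_direction[of "x2 - x1" "q - p"] dir assms(1,2) by simp
  also have "\<dots> \<longleftrightarrow> det2 (y - p) (q - p) = 0"
  proof -
    have "det2 (y - x1) (q - p) = det2 (y - p) (q - p) - det2 (x1 - p) (q - p)"
      by (simp add: det2_def algebra_simps)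
    then show ?thesis using on by simp
  qed
  also have "\<dots> \<longleftrightarrow> y \<in> line_through p q" using mem_line_through_iff[OF assms(1)] by simp
  finally show "y \<in> line_through x1 x2 \<longleftrightarrow> y \<in> line_through p q" .
qed

lemma parallel_refl: "parallel L L"
  unfolding parallel_def by (rule exI[of _ 0]) simp

lemma parallel_line_through_iff:
  assumes "p \<noteq> q" "r \<noteq> s"
  shows "parallel (line_through p q) (line_through r s) \<longleftrightarrow> det2 (q - p) (s - r) = 0"
proof
  assume "parallel (line_through p q) (line_through r s)"
  then obtain v where v: "line_through r s = (\<lambda>x. x + v) ` line_through p q"
    by (auto simp: parallel_def)
  have "r \<in> line_through r s" "s \<in> line_through r s"
    using mem_line_through_iff[OF assms(2)] by auto
  then have "r - v \<in> line_through p q" "s - v \<in> line_through p q"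
    unfolding v by auto
  then have "det2 (r - v - p) (q - p) = 0" "det2 (s - v - p) (q - p) = 0"
    using mem_line_through_iff[OF assms(1)] by auto
  then show "det2 (q - p) (s - r) = 0"
    by (auto simp: det2_def algebra_simps)
next
  assume d: "det2 (q - p) (s - r) = 0"
  have "line_through r s = (\<lambda>x. x + (r - p)) ` line_through p q"
  proof (rule set_eqI)
    fix y
    have "y \<in> (\<lambda>x. x + (r - p)) ` line_through p q \<longleftrightarrow> y - (r - p) \<in> line_through p q"
      by (auto simp: image_iff intro: bexI[of _ "y - (r - p)"])
    also have "\<dots> \<longleftrightarrow> det2 (y - r) (q - p) = 0"
      using mem_line_through_iff[OF assms(1)] by (simp add: algebra_simps)
    also have "\<dots> \<longleftrightarrow> det2 (y - r) (s - r) = 0"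
      using det2_same_direction[of "q - p" "s - r"] d assms by simp
    also have "\<dots> \<longleftrightarrow> y \<in> line_through r s" using mem_line_through_iff[OF assms(2)] by simp
    finally show "y \<in> line_through r s \<longleftrightarrow> y \<in> (\<lambda>x. x + (r - p)) ` line_through p q" by simp
  qed
  then show "parallel (line_through p q) (line_through r s)" unfolding parallel_def by blast
qed

lemma collinear_iff_det2: "collinear {a, b, c} \<longleftrightarrow> det2 (b - a) (c - a) = 0"
proof -
  have "{a, b, c} = {b, a, c}" by auto
  then have "collinear {a, b, c} \<longleftrightarrow> collinear {0, b - a, c - a}"
    using collinear_3[of b a c] by simp
  also have "\<dots> \<longleftrightarrow> b - a = 0 \<or> c - a = 0 \<or> (\<exists>k. c - a = k *\<^sub>R (b - a))"
    by (rule collinear_lemma)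
  also have "\<dots> \<longleftrightarrow> det2 (b - a) (c - a) = 0"
    using det2_eq_0_iff_multiple[of "b - a" "c - a"] det2_commute[of "b - a" "c - a"]
    by (cases "b - a = 0") auto
  finally show ?thesis .
qed

text \<open>A junk value (division by 0) when the lines pq and rs are parallel.\<close>
definition line_meet :: "pt \<Rightarrow> pt \<Rightarrow> pt \<Rightarrow> pt \<Rightarrow> pt" where
  "line_meet p q r s = p + (det2 (r - p) (s - r) / det2 (q - p) (s - r)) *\<^sub>R (q - p)"

lemma line_meet_iff:
  assumes "det2 (q - p) (s - r) \<noteq> 0"
  shows "x = line_meet p q r s \<longleftrightarrow> det2 (x - p) (q - p) = 0 \<and> det2 (x - r) (s - r) = 0"
proof -
  define t0 where "t0 = det2 (r - p) (s - r) / det2 (q - p) (s - r)"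
  have "q - p \<noteq> 0" using assms by (auto simp: det2_def)
  then have on_pq: "det2 (x - p) (q - p) = 0 \<longleftrightarrow> (\<exists>t. x = p + t *\<^sub>R (q - p))"
    using det2_eq_0_iff_multiple[of "q - p" "x - p"] by (auto simp: algebra_simps)
  have on_rs: "det2 (p + t *\<^sub>R (q - p) - r) (s - r) = 0 \<longleftrightarrow> t = t0" for t
    using assms by (simp add: t0_def det2_def field_simps)
  show ?thesis
  proof
    assume "x = line_meet p q r s"
    then have "x = p + t0 *\<^sub>R (q - p)" by (simp add: line_meet_def t0_def)
    then show "det2 (x - p) (q - p) = 0 \<and> det2 (x - r) (s - r) = 0"
      using on_pq on_rs by blast
  next
    assume h: "det2 (x - p) (q - p) = 0 \<and> det2 (x - r) (s - r) = 0"
    then obtain t where t: "x = p + t *\<^sub>R (q - p)" using on_pq by blast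
    then have "t = t0" using h on_rs by blast
    then show "x = line_meet p q r s" using t by (simp add: line_meet_def t0_def)
  qed
qed

lemma line_through_inter:
  assumes "det2 (q - p) (s - r) \<noteq> 0"
  shows "line_through p q \<inter> line_through r s = {line_meet p q r s}"
proof -
  have "p \<noteq> q" "r \<noteq> s" using assms by (auto simp: det2_def)
  then show ?thesis
    using line_meet_iff[OF assms] by (auto simp: mem_line_through_iff)
qed

lemma line_through_no_isolated:
  assumes "p \<noteq> q"
  shows "\<not> x isolated_in line_through p q"
proof
  assume iso: "x isolated_in line_through p q"
  have "line_through p q = (\<lambda>t. p + t *\<^sub>R (q - p)) ` UNIV"
    by (auto simp: line_through_def)
  moreover have "continuous_on UNIV (\<lambda>t. p + t *\<^sub>R (q - p))"
    by (intro continuous_intros)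
  ultimately have "connected (line_through p q)"
    using connected_continuous_image connected_UNIV by metis
  moreover have "p \<in> line_through p q" "q \<in> line_through p q"
    using mem_line_through_iff[OF assms] by auto
  moreover have "x \<in> line_through p q" using iso by (simp add: isolated_in_def)
  ultimately have "x islimpt line_through p q"
    using assms by (intro connected_imp_perfect) auto
  then show False using iso by (simp add: isolated_in_islimpt_iff)
qed

lemma isolated_in_line_through_inter:
  assumes "p \<noteq> q" "r \<noteq> s"
  shows "x isolated_in (line_through p q \<inter> line_through r s) \<longleftrightarrow>
    det2 (q - p) (s - r) \<noteq> 0 \<and> x = line_meet p q r s"
proof
  assume iso: "x isolated_in (line_through p q \<inter> line_through r s)"
  then have x: "det2 (x - p) (q - p) = 0" "det2 (x - r) (s - r) = 0"
    by (auto simp: isolated_in_def mem_line_through_iff assms)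
  have "det2 (q - p) (s - r) \<noteq> 0"
  proof
    assume par: "det2 (q - p) (s - r) = 0"
    have "line_through p q \<subseteq> line_through r s"
    proof
      fix y assume "y \<in> line_through p q"
      then have "det2 (y - x) (q - p) = 0"
        using x(1) by (simp add: mem_line_through_iff assms det2_def algebra_simps)
      then have "det2 (y - x) (s - r) = 0"
        using det2_same_direction[of "q - p" "s - r"] par assms by simp
      then show "y \<in> line_through r s"
        using x(2) by (simp add: mem_line_through_iff assms det2_def algebra_simps)
    qed
    then have "x isolated_in line_through p q"
      using iso isolated_in_subset[of x _ "line_through p q"] by (auto simp: isolated_in_def)
    then show False using line_through_no_isolated[OF assms(1)] by blast
  qed
  then show "det2 (q - p) (s - r) \<noteq> 0 \<and> x = line_meet p q r s"
    using x line_meet_iff by blast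
next
  assume "det2 (q - p) (s - r) \<noteq> 0 \<and> x = line_meet p q r s"
  then show "x isolated_in (line_through p q \<inter> line_through r s)"
    using line_through_inter by (auto simp: isolated_in_def intro: exI[of _ UNIV])
qed

section \<open>Sets closed under intersections of lines\<close>

definition meet_closed :: "pt set \<Rightarrow> bool" where
  "meet_closed D \<longleftrightarrow>
     (\<forall>p\<in>D. \<forall>q\<in>D. \<forall>r\<in>D. \<forall>s\<in>D. det2 (q - p) (s - r) \<noteq> 0 \<longrightarrow> line_meet p q r s \<in> D)"

lemma meet_closedD:
  "meet_closed D \<Longrightarrow> p \<in> D \<Longrightarrow> q \<in> D \<Longrightarrow> r \<in> D \<Longrightarrow> s \<in> D \<Longrightarrow> det2 (q - p) (s - r) \<noteq> 0
    \<Longrightarrow> line_meet p q r s \<in> D"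
  unfolding meet_closed_def by blast

lemma meet_closed_iff_line_through_inter:
  "meet_closed D \<longleftrightarrow>
     (\<forall>b1\<in>D. \<forall>b2\<in>D. \<forall>b3\<in>D. \<forall>b4\<in>D. \<forall>x. b1 \<noteq> b2 \<and> b3 \<noteq> b4 \<and>
        line_through b1 b2 \<noteq> line_through b3 b4 \<and>
        \<not> parallel (line_through b1 b2) (line_through b3 b4) \<and>
        x \<in> line_through b1 b2 \<inter> line_through b3 b4 \<longrightarrow> x \<in> D)"
proof -
  have "(b1 \<noteq> b2 \<and> b3 \<noteq> b4 \<and> line_through b1 b2 \<noteq> line_through b3 b4 \<and>
        \<not> parallel (line_through b1 b2) (line_through b3 b4) \<and>
        x \<in> line_through b1 b2 \<inter> line_through b3 b4) \<longleftrightarrow>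
      det2 (b2 - b1) (b4 - b3) \<noteq> 0 \<and> x = line_meet b1 b2 b3 b4" for b1 b2 b3 b4 x
  proof (cases "b1 \<noteq> b2 \<and> b3 \<noteq> b4")
    case True
    then show ?thesis
      using parallel_line_through_iff[of b1 b2 b3 b4] line_through_inter[of b2 b1 b4 b3]
        parallel_refl by auto
  qed (auto simp: det2_def)
  then show ?thesis unfolding meet_closed_def by auto
qed

lemma tendsto_line_meet [tendsto_intros]:
  assumes "(p \<longlongrightarrow> p0) F" "(q \<longlongrightarrow> q0) F" "(r \<longlongrightarrow> r0) F" "(s \<longlongrightarrow> s0) F"
    and "det2 (q0 - p0) (s0 - r0) \<noteq> 0"
  shows "((\<lambda>n. line_meet (p n) (q n) (r n) (s n)) \<longlongrightarrow> line_meet p0 q0 r0 s0) F"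
  unfolding line_meet_def using assms by (intro tendsto_intros) auto

lemma meet_closed_closure:
  assumes "meet_closed D"
  shows "meet_closed (closure D)"
  unfolding meet_closed_def
proof (intro ballI impI)
  fix p q r s
  assume "p \<in> closure D" "q \<in> closure D" "r \<in> closure D" "s \<in> closure D"
    and d: "det2 (q - p) (s - r) \<noteq> 0"
  then obtain pn qn rn sn where seqs: "\<forall>n. pn n \<in> D \<and> qn n \<in> D \<and> rn n \<in> D \<and> sn n \<in> D"
    and lim: "pn \<longlonglongrightarrow> p" "qn \<longlonglongrightarrow> q" "rn \<longlonglongrightarrow> r" "sn \<longlonglongrightarrow> s"
    unfolding closure_sequential by metis
  have "(\<lambda>n. det2 (qn n - pn n) (sn n - rn n)) \<longlonglongrightarrow> det2 (q - p) (s - r)"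
    using lim by (intro tendsto_intros)
  then have "eventually (\<lambda>n. det2 (qn n - pn n) (sn n - rn n) \<noteq> 0) sequentially"
    using d by (rule tendsto_imp_eventually_ne)
  then have "eventually (\<lambda>n. line_meet (pn n) (qn n) (rn n) (sn n) \<in> closure D) sequentially"
    by eventually_elim (use seqs assms meet_closedD closure_subset in blast)
  moreover have "(\<lambda>n. line_meet (pn n) (qn n) (rn n) (sn n)) \<longlonglongrightarrow> line_meet p q r s"
    using lim d by (intro tendsto_intros)
  ultimately show "line_meet p q r s \<in> closure D"
    by (intro Lim_in_closed_set) auto
qed

lemma meet_closed_mem_two_lines:
  assumes "meet_closed D" "p1 \<in> D" "p2 \<in> D" "p3 \<in> D" "p4 \<in> D"
    and "det2 (p2 - p1) (x - p1) = 0" "det2 (p4 - p3) (x - p3) = 0"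
    and "det2 (p2 - p1) (p3 - p1) \<noteq> 0 \<or> det2 (p2 - p1) (p4 - p1) \<noteq> 0"
    and "det2 (p4 - p3) (p1 - p3) \<noteq> 0 \<or> det2 (p4 - p3) (p2 - p3) \<noteq> 0"
  shows "x \<in> D"
proof -
  have u: "p2 - p1 \<noteq> 0" and w: "p4 - p3 \<noteq> 0" using assms(8,9) by auto
  have nonpar: "det2 (p2 - p1) (p4 - p3) \<noteq> 0"
  proof
    assume "det2 (p2 - p1) (p4 - p3) = 0"
    then obtain k where k: "p4 - p3 = k *\<^sub>R (p2 - p1)" using det2_eq_0_imp_multiple u by blast
    then have "k \<noteq> 0" using w by auto
    with assms(7) k have "det2 (p2 - p1) (x - p3) = 0" by (simp add: det2_def)
    with assms(6) have p3: "det2 (p2 - p1) (p3 - p1) = 0" by (simp add: det2_def algebra_simps)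
    have e: "p4 - p1 = (p3 - p1) + k *\<^sub>R (p2 - p1)" using k by (simp add: algebra_simps)
    have "det2 (p4 - p1) (p2 - p1) = det2 (p3 - p1) (p2 - p1)"
      unfolding e by (simp only: det2_add_scaleR_left det2_self)
    then have "det2 (p2 - p1) (p4 - p1) = 0" using p3 det2_commute by (metis neg_equal_0_iff_equal)
    with p3 show False using assms(8) by simp
  qed
  have "x = line_meet p1 p2 p3 p4"
    using assms(6,7) det2_commute line_meet_iff[OF nonpar] by (metis neg_0_equal_iff_equal)
  then show ?thesis using meet_closedD[OF assms(1-5) nonpar] by simp
qed

section \<open>Projective coordinates\<close>

type_synonym v3 = "real \<times> real \<times> real"

definition det3 :: "v3 \<Rightarrow> v3 \<Rightarrow> v3 \<Rightarrow> real" where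
  "det3 a b c = fst a * (fst (snd b) * snd (snd c) - snd (snd b) * fst (snd c))
     - fst (snd a) * (fst b * snd (snd c) - snd (snd b) * fst c)
     + snd (snd a) * (fst b * fst (snd c) - fst (snd b) * fst c)"

definition dot3 :: "v3 \<Rightarrow> v3 \<Rightarrow> real" where
  "dot3 s v = fst s * fst v + fst (snd s) * fst (snd v) + snd (snd s) * snd (snd v)"

definition pos3 :: "v3 \<Rightarrow> bool" where
  "pos3 v \<longleftrightarrow> fst v > 0 \<and> fst (snd v) > 0 \<and> snd (snd v) > 0"

lemma dot3_pos: "pos3 s \<Longrightarrow> pos3 u \<Longrightarrow> dot3 s u > 0"
  by (simp add: pos3_def dot3_def add_pos_pos)

definition lin3 :: "v3 \<Rightarrow> v3 \<Rightarrow> v3 \<Rightarrow> v3 \<Rightarrow> v3" where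
  "lin3 g1 g2 g3 w = fst w *\<^sub>R g1 + fst (snd w) *\<^sub>R g2 + snd (snd w) *\<^sub>R g3"

lemma det3_lin3: "det3 (lin3 g1 g2 g3 a) (lin3 g1 g2 g3 b) (lin3 g1 g2 g3 c) = det3 g1 g2 g3 * det3 a b c"
  by (simp add: det3_def lin3_def) algebra

lemma dot3_lin3: "dot3 s (lin3 g1 g2 g3 w) = dot3 (dot3 s g1, dot3 s g2, dot3 s g3) w"
  by (simp add: dot3_def lin3_def algebra_simps)

lemma lin3_scaleR: "lin3 g1 g2 g3 (k *\<^sub>R w) = k *\<^sub>R lin3 g1 g2 g3 w"
  by (simp add: lin3_def algebra_simps)

lemma lin3_basis [simp]:
  "lin3 g1 g2 g3 (1, 0, 0) = g1" "lin3 g1 g2 g3 (0, 1, 0) = g2" "lin3 g1 g2 g3 (0, 0, 1) = g3"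
  by (simp_all add: lin3_def)

lemma lin3_surj:
  assumes "det3 g1 g2 g3 \<noteq> 0"
  obtains w where "lin3 g1 g2 g3 w = v"
proof
  let ?d = "det3 g1 g2 g3"
  show "lin3 g1 g2 g3 (det3 v g2 g3 / ?d, det3 g1 v g3 / ?d, det3 g1 g2 v / ?d) = v"
  proof (rule prod_eqI)
    have "det3 v g2 g3 * fst g1 + det3 g1 v g3 * fst g2 + det3 g1 g2 v * fst g3 = ?d * fst v"
      by (simp add: det3_def) algebra
    then show "fst (lin3 g1 g2 g3 (det3 v g2 g3 / ?d, det3 g1 v g3 / ?d, det3 g1 g2 v / ?d)) = fst v"
      using assms by (simp add: lin3_def field_simps)
    have "det3 v g2 g3 * fst (snd g1) + det3 g1 v g3 * fst (snd g2) + det3 g1 g2 v * fst (snd g3)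
        = ?d * fst (snd v)"
      by (simp add: det3_def) algebra
    moreover have "det3 v g2 g3 * snd (snd g1) + det3 g1 v g3 * snd (snd g2) + det3 g1 g2 v * snd (snd g3)
        = ?d * snd (snd v)"
      by (simp add: det3_def) algebra
    ultimately show "snd (lin3 g1 g2 g3 (det3 v g2 g3 / ?d, det3 g1 v g3 / ?d, det3 g1 g2 v / ?d)) = snd v"
      using assms by (simp add: lin3_def field_simps prod_eq_iff)
  qed
qed

definition frame_form :: "real \<Rightarrow> real \<Rightarrow> v3" where
  "frame_form p q = (1 - p - q, p, q)"

text \<open>The projective map sending the coordinate points and (1, 1, 1) to (0, 0), (1, 0), (0, 1)
  and (p, q); the line where the linear form frame_form p q vanishes goes to infinity.\<close>
definition frame_map :: "real \<Rightarrow> real \<Rightarrow> v3 \<Rightarrow> pt" where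
  "frame_map p q v =
     (p * fst (snd v) / dot3 (frame_form p q) v, q * snd (snd v) / dot3 (frame_form p q) v)"

lemma frame_map_scaleR:
  assumes "k \<noteq> 0"
  shows "frame_map p q (k *\<^sub>R v) = frame_map p q v"
proof -
  have "dot3 (frame_form p q) (k *\<^sub>R v) = k * dot3 (frame_form p q) v"
    by (simp add: dot3_def algebra_simps)
  then show ?thesis using assms by (simp add: frame_map_def)
qed

lemma frame_map_surj:
  assumes "p \<noteq> 0" "q \<noteq> 0" "1 - p - q \<noteq> 0"
  obtains v where "dot3 (frame_form p q) v = 1" "frame_map p q v = z"
proof
  let ?v = "((1 - fst z - snd z) / (1 - p - q), fst z / p, snd z / q)"
  show *: "dot3 (frame_form p q) ?v = 1"
    using assms by (simp add: dot3_def frame_form_def)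
  show "frame_map p q ?v = z"
    using assms by (simp add: frame_map_def *)
qed

lemma det2_frame_map:
  assumes "dot3 (frame_form p q) a \<noteq> 0" "dot3 (frame_form p q) b \<noteq> 0" "dot3 (frame_form p q) c \<noteq> 0"
  shows "det2 (frame_map p q b - frame_map p q a) (frame_map p q c - frame_map p q a) =
     p * q * (1 - p - q) * det3 a b c /
       (dot3 (frame_form p q) a * dot3 (frame_form p q) b * dot3 (frame_form p q) c)"
proof -
  obtain a1 a2 a3 b1 b2 b3 c1 c2 c3 where abc: "a = (a1, a2, a3)" "b = (b1, b2, b3)" "c = (c1, c2, c3)"
    by (metis prod.exhaust)
  define sa where "sa = (1 - p - q) * a1 + p * a2 + q * a3"
  define sb where "sb = (1 - p - q) * b1 + p * b2 + q * b3"
  define sc where "sc = (1 - p - q) * c1 + p * c2 + q * c3"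
  have s: "dot3 (frame_form p q) a = sa" "dot3 (frame_form p q) b = sb" "dot3 (frame_form p q) c = sc"
    by (simp_all add: abc dot3_def frame_form_def sa_def sb_def sc_def)
  have nz: "sa \<noteq> 0" "sb \<noteq> 0" "sc \<noteq> 0" using assms s by simp_all
  have "det2 (frame_map p q b - frame_map p q a) (frame_map p q c - frame_map p q a) =
    (p * b2 / sb - p * a2 / sa) * (q * c3 / sc - q * a3 / sa)
      - (q * b3 / sb - q * a3 / sa) * (p * c2 / sc - p * a2 / sa)"
    unfolding frame_map_def s by (simp add: det2_def abc)
  also have "\<dots> = p * q * ((b2 * sa - a2 * sb) * (c3 * sa - a3 * sc)
      - (b3 * sa - a3 * sb) * (c2 * sa - a2 * sc)) / (sa * sa * sb * sc)"
    using nz by (simp add: field_simps)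
  also have "(b2 * sa - a2 * sb) * (c3 * sa - a3 * sc) - (b3 * sa - a3 * sb) * (c2 * sa - a2 * sc)
     = sa * ((1 - p - q) * det3 a b c)"
    by (simp add: abc det3_def sa_def sb_def sc_def) algebra
  finally have h: "det2 (frame_map p q b - frame_map p q a) (frame_map p q c - frame_map p q a) =
      p * q * (sa * ((1 - p - q) * det3 a b c)) / (sa * sa * sb * sc)" .
  show ?thesis unfolding s h using nz by (simp add: field_simps)
qed

text \<open>Closure under intersections of distinct lines u1u2 and u3u4, restricted to the affine chart
  where the linear form \<sigma> does not vanish.\<close>
definition proj_meet_closed :: "v3 set \<Rightarrow> v3 \<Rightarrow> bool" where
  "proj_meet_closed V \<sigma> \<longleftrightarrow> (\<forall>u1\<in>V. \<forall>u2\<in>V. \<forall>u3\<in>V. \<forall>u4\<in>V. \<forall>w.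
     dot3 \<sigma> w \<noteq> 0 \<longrightarrow> det3 u1 u2 w = 0 \<longrightarrow> det3 u3 u4 w = 0 \<longrightarrow>
     (det3 u1 u2 u3 \<noteq> 0 \<or> det3 u1 u2 u4 \<noteq> 0) \<longrightarrow> (det3 u3 u4 u1 \<noteq> 0 \<or> det3 u3 u4 u2 \<noteq> 0) \<longrightarrow>
     w \<in> V)"

lemma proj_meet_closedD:
  assumes "proj_meet_closed V \<sigma>" "u1 \<in> V" "u2 \<in> V" "u3 \<in> V" "u4 \<in> V" "dot3 \<sigma> w \<noteq> 0"
    "det3 u1 u2 w = 0" "det3 u3 u4 w = 0"
    "det3 u1 u2 u3 \<noteq> 0 \<or> det3 u1 u2 u4 \<noteq> 0" "det3 u3 u4 u1 \<noteq> 0 \<or> det3 u3 u4 u2 \<noteq> 0"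
  shows "w \<in> V"
  using assms unfolding proj_meet_closed_def by blast

lemma proj_meet_closed_frame_map:
  assumes "meet_closed E" "p * q * (1 - p - q) \<noteq> 0"
  shows "proj_meet_closed {v. dot3 (frame_form p q) v \<noteq> 0 \<and> frame_map p q v \<in> E} (frame_form p q)"
  unfolding proj_meet_closed_def
proof (intro ballI allI impI)
  let ?\<phi> = "frame_map p q"
  fix u1 u2 u3 u4 w
  assume "u1 \<in> {v. dot3 (frame_form p q) v \<noteq> 0 \<and> ?\<phi> v \<in> E}"
     "u2 \<in> {v. dot3 (frame_form p q) v \<noteq> 0 \<and> ?\<phi> v \<in> E}"
     "u3 \<in> {v. dot3 (frame_form p q) v \<noteq> 0 \<and> ?\<phi> v \<in> E}"
     "u4 \<in> {v. dot3 (frame_form p q) v \<noteq> 0 \<and> ?\<phi> v \<in> E}"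
  then have s: "dot3 (frame_form p q) u1 \<noteq> 0" "dot3 (frame_form p q) u2 \<noteq> 0"
      "dot3 (frame_form p q) u3 \<noteq> 0" "dot3 (frame_form p q) u4 \<noteq> 0"
    and inE: "?\<phi> u1 \<in> E" "?\<phi> u2 \<in> E" "?\<phi> u3 \<in> E" "?\<phi> u4 \<in> E" by auto
  assume w: "dot3 (frame_form p q) w \<noteq> 0"
    and d: "det3 u1 u2 w = 0" "det3 u3 u4 w = 0"
    and nd: "det3 u1 u2 u3 \<noteq> 0 \<or> det3 u1 u2 u4 \<noteq> 0" "det3 u3 u4 u1 \<noteq> 0 \<or> det3 u3 u4 u2 \<noteq> 0"
  have z: "det2 (?\<phi> b - ?\<phi> a) (?\<phi> c - ?\<phi> a) = 0 \<longleftrightarrow> det3 a b c = 0"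
    if "dot3 (frame_form p q) a \<noteq> 0" "dot3 (frame_form p q) b \<noteq> 0" "dot3 (frame_form p q) c \<noteq> 0"
    for a b c
    using that assms(2) by (simp add: det2_frame_map)
  have "?\<phi> w \<in> E"
    by (rule meet_closed_mem_two_lines[OF assms(1) inE])
      (use z[OF s(1,2) w] z[OF s(3,4) w] z[OF s(1,2,3)] z[OF s(1,2,4)] z[OF s(3,4,1)] z[OF s(3,4,2)]
        d nd in simp_all)
  then show "w \<in> {v. dot3 (frame_form p q) v \<noteq> 0 \<and> ?\<phi> v \<in> E}" using w by simp
qed

lemma proj_meet_closed_vimage:
  assumes "proj_meet_closed V \<sigma>" "\<And>a b c. det3 (F a) (F b) (F c) = k * det3 a b c" "k \<noteq> 0"
    "\<And>v. dot3 \<sigma> (F v) = dot3 \<sigma>' v"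
  shows "proj_meet_closed (F -` V) \<sigma>'"
  unfolding proj_meet_closed_def
proof (intro ballI allI impI)
  fix u1 u2 u3 u4 w
  assume "u1 \<in> F -` V" "u2 \<in> F -` V" "u3 \<in> F -` V" "u4 \<in> F -` V" "dot3 \<sigma>' w \<noteq> 0"
    "det3 u1 u2 w = 0" "det3 u3 u4 w = 0"
    "det3 u1 u2 u3 \<noteq> 0 \<or> det3 u1 u2 u4 \<noteq> 0" "det3 u3 u4 u1 \<noteq> 0 \<or> det3 u3 u4 u2 \<noteq> 0"
  then show "w \<in> F -` V"
    using proj_meet_closedD[OF assms(1), of "F u1" "F u2" "F u3" "F u4" "F w"] assms(2-4) by simp
qed

lemma proj_meet_closed_lin3:
  assumes "proj_meet_closed V \<sigma>" "det3 g1 g2 g3 \<noteq> 0"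
  shows "proj_meet_closed (lin3 g1 g2 g3 -` V) (dot3 \<sigma> g1, dot3 \<sigma> g2, dot3 \<sigma> g3)"
  using proj_meet_closed_vimage[OF assms(1) det3_lin3 assms(2) dot3_lin3] .

section \<open>Density of closed meet-closed sets\<close>

text \<open>In the standard frame, intersections of lines produce every positive integer point.\<close>
locale proj_frame =
  fixes V :: "v3 set" and \<sigma> :: v3
  assumes closed: "proj_meet_closed V \<sigma>" and pos: "pos3 \<sigma>"
    and basis: "(1, 0, 0) \<in> V" "(0, 1, 0) \<in> V" "(0, 0, 1) \<in> V" and unit: "(1, 1, 1) \<in> V"
begin

lemma dot3_nonneg_ne_0:
  assumes "a \<ge> 0" "b \<ge> 0" "c \<ge> 0" "a + b + c > 0"
  shows "dot3 \<sigma> (a, b, c) \<noteq> 0"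
proof -
  have "fst \<sigma> * a \<ge> 0" "fst (snd \<sigma>) * b \<ge> 0" "snd (snd \<sigma>) * c \<ge> 0"
    using assms pos by (simp_all add: pos3_def)
  moreover consider "a > 0" | "b > 0" | "c > 0" using assms by linarith
  then have "fst \<sigma> * a > 0 \<or> fst (snd \<sigma>) * b > 0 \<or> snd (snd \<sigma>) * c > 0"
    by cases (use pos in \<open>simp_all add: pos3_def\<close>)
  ultimately show ?thesis by (auto simp: dot3_def)
qed

lemma swap12: "proj_frame (lin3 (0, 1, 0) (1, 0, 0) (0, 0, 1) -` V) (fst (snd \<sigma>), fst \<sigma>, snd (snd \<sigma>))"
proof
  show "proj_meet_closed (lin3 (0, 1, 0) (1, 0, 0) (0, 0, 1) -` V) (fst (snd \<sigma>), fst \<sigma>, snd (snd \<sigma>))"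
    using proj_meet_closed_lin3[OF closed, of "(0, 1, 0)" "(1, 0, 0)" "(0, 0, 1)"]
    by (simp add: det3_def dot3_def)
qed (use pos basis unit in \<open>simp_all add: pos3_def lin3_def\<close>)

lemma swap23: "proj_frame (lin3 (1, 0, 0) (0, 0, 1) (0, 1, 0) -` V) (fst \<sigma>, snd (snd \<sigma>), fst (snd \<sigma>))"
proof
  show "proj_meet_closed (lin3 (1, 0, 0) (0, 0, 1) (0, 1, 0) -` V) (fst \<sigma>, snd (snd \<sigma>), fst (snd \<sigma>))"
    using proj_meet_closed_lin3[OF closed, of "(1, 0, 0)" "(0, 0, 1)" "(0, 1, 0)"]
    by (simp add: det3_def dot3_def)
qed (use pos basis unit in \<open>simp_all add: pos3_def lin3_def\<close>)

lemma swap13: "proj_frame (lin3 (0, 0, 1) (0, 1, 0) (1, 0, 0) -` V) (snd (snd \<sigma>), fst (snd \<sigma>), fst \<sigma>)"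
proof
  show "proj_meet_closed (lin3 (0, 0, 1) (0, 1, 0) (1, 0, 0) -` V) (snd (snd \<sigma>), fst (snd \<sigma>), fst \<sigma>)"
    using proj_meet_closed_lin3[OF closed, of "(0, 0, 1)" "(0, 1, 0)" "(1, 0, 0)"]
    by (simp add: det3_def dot3_def)
qed (use pos basis unit in \<open>simp_all add: pos3_def lin3_def\<close>)

lemma meetI:
  assumes "u1 \<in> V" "u2 \<in> V" "u3 \<in> V" "u4 \<in> V" "a \<ge> 0" "b \<ge> 0" "c \<ge> 0" "a + b + c > 0"
    "det3 u1 u2 (a, b, c) = 0" "det3 u3 u4 (a, b, c) = 0"
    "det3 u1 u2 u3 \<noteq> 0 \<or> det3 u1 u2 u4 \<noteq> 0" "det3 u3 u4 u1 \<noteq> 0 \<or> det3 u3 u4 u2 \<noteq> 0"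
  shows "(a, b, c) \<in> V"
  using proj_meet_closedD[OF closed assms(1-4) dot3_nonneg_ne_0[OF assms(5-8)]] assms(9-12) .

lemma mem_110: "(1, 1, 0) \<in> V"
  by (rule meetI[OF basis(1,2) basis(3) unit]) (auto simp: det3_def)

lemma mem_add_first:
  assumes "(x, y, 0) \<in> V" "x > 0" "y > 0"
  shows "(x + y, y, 0) \<in> V"
proof -
  have e23: "(0, 1, 1) \<in> V" and e13: "(1, 0, 1) \<in> V"
    using proj_frame.mem_110[OF swap13] proj_frame.mem_110[OF swap23] by (simp_all add: lin3_def)
  have "(x + y, y, y) \<in> V"
    by (rule meetI[OF assms(1) e13 basis(1) e23]) (use assms in \<open>auto simp: det3_def algebra_simps\<close>)
  then show ?thesis
    by (rule meetI[OF basis(3) _ basis(1) basis(2)]) (use assms in \<open>auto simp: det3_def algebra_simps\<close>)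
qed

lemma mem_nat_first: "n \<ge> 1 \<Longrightarrow> (real n, 1, 0) \<in> V"
proof (induction n rule: dec_induct)
  case base
  then show ?case using mem_110 by simp
next
  case (step n)
  then show ?case using mem_add_first[of "real n" 1] by (simp add: add.commute)
qed

lemma mem_join:
  assumes "(a, b, 0) \<in> V" "(0, b, c) \<in> V" "a > 0" "b > 0" "c > 0"
  shows "(a, b, c) \<in> V"
  by (rule meetI[OF basis(3) assms(1) basis(1) assms(2)]) (use assms in \<open>auto simp: det3_def algebra_simps\<close>)

lemma mem_drop_second:
  assumes "(a, b, c) \<in> V" "a > 0" "b > 0" "c > 0"
  shows "(a, 0, c) \<in> V"
  by (rule meetI[OF basis(2) assms(1) basis(1) basis(3)]) (use assms in \<open>auto simp: det3_def algebra_simps\<close>)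

lemma mem_nat_first_third: "m \<ge> 1 \<Longrightarrow> n \<ge> 1 \<Longrightarrow> (real m, 0, real n) \<in> V"
proof -
  assume mn: "m \<ge> 1" "n \<ge> 1"
  have "(0, 1, real n) \<in> V" using proj_frame.mem_nat_first[OF swap13 mn(2)] by (simp add: lin3_def)
  then have "(real m, 1, real n) \<in> V" using mem_join[OF mem_nat_first[OF mn(1)]] mn by simp
  then show ?thesis using mem_drop_second mn by simp
qed

lemma mem_of_nat: "a \<ge> 1 \<Longrightarrow> b \<ge> 1 \<Longrightarrow> c \<ge> 1 \<Longrightarrow> (real a, real b, real c) \<in> V"
proof -
  assume abc: "a \<ge> 1" "b \<ge> 1" "c \<ge> 1"
  have "(real a, real b, 0) \<in> V"
    using proj_frame.mem_nat_first_third[OF swap23 abc(1,2)] by (simp add: lin3_def)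
  moreover have "(0, real b, real c) \<in> V"
    using proj_frame.mem_nat_first_third[OF swap12 abc(2,3)] by (simp add: lin3_def)
  ultimately show ?thesis using mem_join abc by simp
qed

end

lemma proj_meet_closed_all:
  assumes closed: "proj_meet_closed W s" and pos: "\<And>u. pos3 u \<Longrightarrow> u \<in> W"
    and w: "dot3 s w \<noteq> 0"
  shows "w \<in> W"
proof -
  obtain w1 w2 w3 where wd: "w = (w1, w2, w3)" by (metis prod.exhaust)
  define e where "e = 1 / (2 * (1 + \<bar>w1\<bar> + \<bar>w2\<bar> + \<bar>w3\<bar>))"
  have e: "e > 0" by (simp add: e_def add_pos_nonneg)
  have shift: "t + e * x > 0" if "t \<ge> 1" "x \<in> {w1, w2, w3}" for t x
  proof -
    have "e * \<bar>x\<bar> \<le> 1 / 2" using that(2) by (auto simp: e_def field_simps)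
    moreover have "- (e * \<bar>x\<bar>) \<le> e * x" using e by (simp add: abs_if)
    ultimately show ?thesis using that(1) by linarith
  qed
  \<comment> \<open>w is the meet of the lines through a, a + e w and through b, b + e w\<close>
  have via: "w \<in> W"
    if ab: "det3 (a1, a2, a3) w (b1, b2, b3) \<noteq> 0" "a1 \<ge> 1" "a2 \<ge> 1" "a3 \<ge> 1" "b1 \<ge> 1" "b2 \<ge> 1" "b3 \<ge> 1"
    for a1 a2 a3 b1 b2 b3
  proof (rule proj_meet_closedD[OF closed])
    let ?a = "(a1, a2, a3)" and ?a' = "(a1 + e * w1, a2 + e * w2, a3 + e * w3)"
    let ?b = "(b1, b2, b3)" and ?b' = "(b1 + e * w1, b2 + e * w2, b3 + e * w3)"
    show "?a \<in> W" "?a' \<in> W" "?b \<in> W" "?b' \<in> W" using ab by (auto intro!: pos shift simp: pos3_def)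
    show "dot3 s w \<noteq> 0" by (rule w)
    show "det3 ?a ?a' w = 0" "det3 ?b ?b' w = 0" by (simp_all add: wd det3_def algebra_simps)
    have "det3 ?a ?a' ?b = e * det3 ?a w ?b" "det3 ?b ?b' ?a = - e * det3 ?a w ?b"
      by (simp_all add: wd det3_def algebra_simps)
    then show "det3 ?a ?a' ?b \<noteq> 0 \<or> det3 ?a ?a' ?b' \<noteq> 0" "det3 ?b ?b' ?a \<noteq> 0 \<or> det3 ?b ?b' ?a' \<noteq> 0"
      using ab(1) e by simp_all
  qed
  have "w1 \<noteq> 0 \<or> w2 \<noteq> 0 \<or> w3 \<noteq> 0" using w by (auto simp: wd dot3_def)
  then have "det3 (1, 1, 1) w (1, 2, 3) \<noteq> 0 \<or> det3 (1, 1, 1) w (1, 3, 2) \<noteq> 0 \<or>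
      det3 (1, 1, 2) w (1, 2, 1) \<noteq> 0"
    by (simp add: wd det3_def) arith
  then show ?thesis using via by force
qed

lemma ceiling_ratio_tendsto: "(\<lambda>n. of_int \<lceil>real (Suc n) * a\<rceil> / real (Suc n)) \<longlonglongrightarrow> a"
proof (rule tendsto_sandwich[of "\<lambda>n. a" _ _ "\<lambda>n. a + inverse (real (Suc n))"])
  show "\<forall>\<^sub>F n in sequentially. a \<le> of_int \<lceil>real (Suc n) * a\<rceil> / real (Suc n)"
    by (intro always_eventually allI) (simp add: field_simps del: of_nat_Suc)
  have "of_int \<lceil>real (Suc n) * a\<rceil> \<le> real (Suc n) * a + 1" for n by linarith
  then show "\<forall>\<^sub>F n in sequentially. of_int \<lceil>real (Suc n) * a\<rceil> / real (Suc n) \<le> a + inverse (real (Suc n))"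
    by (intro always_eventually allI) (simp add: field_simps del: of_nat_Suc)
  show "(\<lambda>n. a + inverse (real (Suc n))) \<longlonglongrightarrow> a"
    using tendsto_add[OF tendsto_const LIMSEQ_inverse_real_of_nat, of a] by simp
qed simp

text \<open>The rays through positive integer triples are dense in the positive octant.\<close>
lemma homogeneous_of_nat_closed:
  fixes f :: "v3 \<Rightarrow> 'a::topological_space"
  assumes "closed E" "\<And>k v. k > 0 \<Longrightarrow> f (k *\<^sub>R v) = f v"
    and "\<And>a b c. a \<ge> 1 \<Longrightarrow> b \<ge> 1 \<Longrightarrow> c \<ge> 1 \<Longrightarrow> f (real a, real b, real c) \<in> E"
    and "isCont f w" "pos3 w"
  shows "f w \<in> E"
proof -
  obtain w1 w2 w3 where wd: "w = (w1, w2, w3)" by (metis prod.exhaust)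
  define r where "r x n = nat \<lceil>real (Suc n) * x\<rceil>" for x n
  have r: "r x n \<ge> 1" "real (r x n) = of_int \<lceil>real (Suc n) * x\<rceil>" if "x > 0" for x n
  proof -
    have "1 \<le> \<lceil>real (Suc n) * x\<rceil>" using that by simp
    then show "r x n \<ge> 1" "real (r x n) = of_int \<lceil>real (Suc n) * x\<rceil>"
      by (simp_all add: r_def le_nat_iff)
  qed
  define x where "x n = inverse (real (Suc n)) *\<^sub>R (real (r w1 n), real (r w2 n), real (r w3 n))" for n
  have pos: "w1 > 0" "w2 > 0" "w3 > 0" using assms(5) by (simp_all add: wd pos3_def)
  have "f (x n) \<in> E" for n
  proof -
    have "f (x n) = f (real (r w1 n), real (r w2 n), real (r w3 n))"
      unfolding x_def by (rule assms(2)) simp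
    then show ?thesis using assms(3) r(1) pos by simp
  qed
  moreover have "x \<longlonglongrightarrow> w"
  proof -
    have c: "(\<lambda>n. inverse (real (Suc n)) * real (r y n)) \<longlonglongrightarrow> y" if "y > 0" for y
      using ceiling_ratio_tendsto[of y] r(2)[OF that]
      by (simp add: divide_inverse_commute del: of_nat_Suc)
    have "x = (\<lambda>n. (inverse (real (Suc n)) * real (r w1 n), inverse (real (Suc n)) * real (r w2 n),
        inverse (real (Suc n)) * real (r w3 n)))"
      by (simp add: x_def fun_eq_iff del: of_nat_Suc)
    then show ?thesis using c pos unfolding wd by (simp del: of_nat_Suc add: tendsto_Pair)
  qed
  then have "(\<lambda>n. f (x n)) \<longlonglongrightarrow> f w" using assms(4) isCont_tendsto_compose by blast
  ultimately show ?thesis using assms(1) by (intro Lim_in_closed_set) auto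
qed

lemma isCont_frame_map_lin3:
  assumes "dot3 (frame_form p q) (lin3 g1 g2 g3 w) \<noteq> 0"
  shows "isCont (\<lambda>v. frame_map p q (lin3 g1 g2 g3 v)) w"
  using assms unfolding frame_map_def dot3_def lin3_def by (intro continuous_intros) auto

lemma closed_meet_closed_frame_eq_UNIV:
  fixes E :: "pt set" and p q :: real
  defines "V \<equiv> {v. dot3 (frame_form p q) v \<noteq> 0 \<and> frame_map p q v \<in> E}"
  assumes E: "closed E" "meet_closed E" and pq: "p \<noteq> 0" "q \<noteq> 0" "1 - p - q \<noteq> 0"
    and g: "g1 \<in> V" "g2 \<in> V" "g3 \<in> V" "g1 + g2 + g3 \<in> V" "det3 g1 g2 g3 \<noteq> 0"
    and gpos: "pos3 (dot3 (frame_form p q) g1, dot3 (frame_form p q) g2, dot3 (frame_form p q) g3)"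
  shows "E = UNIV"
proof -
  let ?s = "(dot3 (frame_form p q) g1, dot3 (frame_form p q) g2, dot3 (frame_form p q) g3)"
  let ?f = "\<lambda>v. frame_map p q (lin3 g1 g2 g3 v)"
  define W where "W = lin3 g1 g2 g3 -` V"
  have dot3_s: "dot3 (frame_form p q) (lin3 g1 g2 g3 w) = dot3 ?s w" for w
    by (rule dot3_lin3)
  have closed_W: "proj_meet_closed W ?s" unfolding W_def V_def
    using proj_meet_closed_lin3[OF proj_meet_closed_frame_map[OF E(2)] g(5)] pq by simp
  interpret proj_frame W ?s
    by unfold_locales (use closed_W gpos g in \<open>simp_all add: W_def lin3_def\<close>)
  have "u \<in> W" if "pos3 u" for u
  proof -
    have pos: "dot3 ?s u > 0" using dot3_pos[OF gpos that] .
    have hom: "?f (k *\<^sub>R v) = ?f v" if "k > 0" for k v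
      using that frame_map_scaleR by (simp add: lin3_scaleR)
    have nat: "?f (real a, real b, real c) \<in> E" if "a \<ge> 1" "b \<ge> 1" "c \<ge> 1" for a b c
      using mem_of_nat[OF that] by (simp add: W_def V_def)
    have "isCont ?f u" using pos dot3_s by (intro isCont_frame_map_lin3) simp
    then have "?f u \<in> E" using homogeneous_of_nat_closed[OF E(1) hom nat _ that] by blast
    then show "u \<in> W" using pos dot3_s by (simp add: W_def V_def)
  qed
  then have W_all: "w \<in> W" if "dot3 ?s w \<noteq> 0" for w
    using proj_meet_closed_all[OF closed_W] that by blast
  show ?thesis
  proof (intro set_eqI iffI)
    fix z :: pt
    obtain v where v: "dot3 (frame_form p q) v = 1" "frame_map p q v = z"
      using frame_map_surj[OF pq] by blast
    obtain w where w: "lin3 g1 g2 g3 w = v" using lin3_surj[OF g(5)] by blast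
    have "w \<in> W" using W_all[of w] dot3_s[of w] v(1) w by simp
    then show "z \<in> E" using v w by (simp add: W_def V_def)
  qed simp
qed

text \<open>Needed to change frames when the frame points are not all on one side of the line sent to
  infinity.\<close>
lemma proj_meet_closed_122:
  assumes closed: "proj_meet_closed V \<sigma>"
    and basis: "(1, 0, 0) \<in> V" "(0, 1, 0) \<in> V" "(0, 0, 1) \<in> V" "(1, 1, 1) \<in> V"
    and \<sigma>: "dot3 \<sigma> (1, 1, 0) \<noteq> 0" "dot3 \<sigma> (0, 1, 1) \<noteq> 0" "dot3 \<sigma> (1, 2, 1) \<noteq> 0" "dot3 \<sigma> (1, 2, 2) \<noteq> 0"
  shows "(1, 2, 2) \<in> V"
proof -
  have E: "(1, 1, 0) \<in> V"
    by (rule proj_meet_closedD[OF closed basis(1,2,3,4) \<sigma>(1)]) (auto simp: det3_def)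
  have X: "(0, 1, 1) \<in> V"
    by (rule proj_meet_closedD[OF closed basis(1,4,2,3) \<sigma>(2)]) (auto simp: det3_def)
  have H: "(1, 2, 1) \<in> V"
    by (rule proj_meet_closedD[OF closed E X basis(2,4) \<sigma>(3)]) (auto simp: det3_def)
  show ?thesis
    by (rule proj_meet_closedD[OF closed basis(3) H basis(4) X \<sigma>(4)]) (auto simp: det3_def)
qed

lemma closed_meet_closed_eq_UNIV:
  fixes E :: "pt set" and p q :: real
  assumes E: "closed E" "meet_closed E"
    and frame: "(0, 0) \<in> E" "(1, 0) \<in> E" "(0, 1) \<in> E" "(p, q) \<in> E"
    and pq: "p \<noteq> 0" "q \<noteq> 0" "1 - p - q \<noteq> 0" "p \<noteq> 1" "q \<noteq> 1" "p + q \<noteq> 0"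
  shows "E = UNIV"
proof -
  define V where "V = {v. dot3 (frame_form p q) v \<noteq> 0 \<and> frame_map p q v \<in> E}"
  have closed_V: "proj_meet_closed V (frame_form p q)"
    using proj_meet_closed_frame_map[OF E(2)] pq by (simp add: V_def)
  have e: "(1, 0, 0) \<in> V" "(0, 1, 0) \<in> V" "(0, 0, 1) \<in> V" "(1, 1, 1) \<in> V"
     "(-1, 0, 0) \<in> V" "(0, -1, 0) \<in> V" "(0, 0, -1) \<in> V"
    using pq frame by (simp_all add: V_def dot3_def frame_form_def frame_map_def)
  note frame_eq = closed_meet_closed_frame_eq_UNIV[OF E pq(1-3), folded V_def]
  note simps = dot3_def frame_form_def det3_def pos3_def
  \<comment> \<open>choose frame points on the positive side of the line sent to infinity; the eighth sign
    pattern is impossible since 1 - p - q, p and q sum to 1\<close>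
  consider "1 - p - q > 0" "p > 0" "q > 0" | "1 - p - q < 0" "p > 0" "q > 0"
    | "1 - p - q > 0" "p < 0" "q > 0" | "1 - p - q > 0" "p > 0" "q < 0"
    | "1 - p - q > 0" "p < 0" "q < 0" | "1 - p - q < 0" "p > 0" "q < 0"
    | "1 - p - q < 0" "p < 0" "q > 0"
    using pq(1-3) by (metis linorder_neqE_linordered_idom add_neg_neg diff_diff_eq diff_gt_0_iff_gt
      less_trans zero_less_one)
  then show ?thesis
  proof cases
    case 1
    then show ?thesis by (intro frame_eq[OF e(1-3)]) (use e in \<open>simp_all add: simps\<close>)
  next
    case 2
    then have "(1, 2, 2) \<in> V"
      by (intro proj_meet_closed_122[OF closed_V e(1-4)]) (use pq in \<open>simp_all add: simps\<close>)
    with 2 show ?thesis by (intro frame_eq[OF e(4,2,3)]) (simp_all add: simps)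
  next
    case 3
    have "proj_meet_closed (lin3 (0, 1, 0) (1, 0, 0) (0, 0, 1) -` V) (p, 1 - p - q, q)"
      using proj_meet_closed_lin3[OF closed_V, of "(0, 1, 0)" "(1, 0, 0)" "(0, 0, 1)"] by (simp add: simps)
    then have "(1, 2, 2) \<in> lin3 (0, 1, 0) (1, 0, 0) (0, 0, 1) -` V"
      by (rule proj_meet_closed_122) (use 3 pq e in \<open>simp_all add: simps lin3_def\<close>)
    with 3 show ?thesis by (intro frame_eq[OF e(4,1,3)]) (simp_all add: simps lin3_def)
  next
    case 4
    have "proj_meet_closed (lin3 (0, 0, 1) (1, 0, 0) (0, 1, 0) -` V) (q, 1 - p - q, p)"
      using proj_meet_closed_lin3[OF closed_V, of "(0, 0, 1)" "(1, 0, 0)" "(0, 1, 0)"] by (simp add: simps)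
    then have "(1, 2, 2) \<in> lin3 (0, 0, 1) (1, 0, 0) (0, 1, 0) -` V"
      by (rule proj_meet_closed_122) (use 4 pq e in \<open>simp_all add: simps lin3_def\<close>)
    with 4 show ?thesis by (intro frame_eq[OF e(4,1,2)]) (simp_all add: simps lin3_def)
  next
    case 5
    then show ?thesis by (intro frame_eq[OF e(6,7,4)]) (use e in \<open>simp_all add: simps\<close>)
  next
    case 6
    then show ?thesis by (intro frame_eq[OF e(5,7,4)]) (use e in \<open>simp_all add: simps\<close>)
  next
    case 7
    then show ?thesis by (intro frame_eq[OF e(5,6,4)]) (use e in \<open>simp_all add: simps\<close>)
  qed
qed

section \<open>Quadrangles and general position\<close>

definition affine_frame :: "pt \<Rightarrow> pt \<Rightarrow> pt \<Rightarrow> pt \<Rightarrow> pt" where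
  "affine_frame c0 c1 c2 x = c0 + fst x *\<^sub>R (c1 - c0) + snd x *\<^sub>R (c2 - c0)"

lemma affine_frame_std [simp]:
  "affine_frame c0 c1 c2 (0, 0) = c0" "affine_frame c0 c1 c2 (1, 0) = c1"
  "affine_frame c0 c1 c2 (0, 1) = c2"
  by (simp_all add: affine_frame_def)

lemma det2_affine_frame:
  "det2 (affine_frame c0 c1 c2 a - affine_frame c0 c1 c2 b) (affine_frame c0 c1 c2 c - affine_frame c0 c1 c2 d)
     = det2 (c1 - c0) (c2 - c0) * det2 (a - b) (c - d)"
proof -
  have "affine_frame c0 c1 c2 a - affine_frame c0 c1 c2 b = fst (a - b) *\<^sub>R (c1 - c0) + snd (a - b) *\<^sub>R (c2 - c0)"
    for a b by (simp add: affine_frame_def algebra_simps)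
  then show ?thesis by (simp add: det2_linear_combinations) (simp add: det2_def)
qed

lemma det2_cramer: "det2 y v *\<^sub>R u + det2 u y *\<^sub>R v = det2 u v *\<^sub>R y"
  by (simp add: det2_def prod_eq_iff algebra_simps)

lemma affine_frame_surj:
  assumes "det2 (c1 - c0) (c2 - c0) \<noteq> 0"
  obtains x where "affine_frame c0 c1 c2 x = y"
proof
  let ?u = "c1 - c0" and ?v = "c2 - c0" and ?y = "y - c0"
  let ?\<delta> = "det2 ?u ?v"
  have "(det2 ?y ?v / ?\<delta>) *\<^sub>R ?u + (det2 ?u ?y / ?\<delta>) *\<^sub>R ?v
      = inverse ?\<delta> *\<^sub>R (det2 ?y ?v *\<^sub>R ?u + det2 ?u ?y *\<^sub>R ?v)"
    by (simp add: divide_inverse_commute scaleR_add_right)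
  also have "\<dots> = ?y" using assms by (simp add: det2_cramer)
  finally show "affine_frame c0 c1 c2 (det2 ?y ?v / ?\<delta>, det2 ?u ?y / ?\<delta>) = y"
    by (simp add: affine_frame_def algebra_simps)
qed

lemma line_meet_affine_frame:
  assumes "det2 (c1 - c0) (c2 - c0) \<noteq> 0" "det2 (q - p) (s - r) \<noteq> 0"
  shows "affine_frame c0 c1 c2 (line_meet p q r s) =
    line_meet (affine_frame c0 c1 c2 p) (affine_frame c0 c1 c2 q) (affine_frame c0 c1 c2 r) (affine_frame c0 c1 c2 s)"
  using assms line_meet_iff[OF assms(2), of "line_meet p q r s"]
  by (subst line_meet_iff) (simp_all add: det2_affine_frame)

lemma meet_closed_vimage_affine_frame:
  assumes "meet_closed E" "det2 (c1 - c0) (c2 - c0) \<noteq> 0"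
  shows "meet_closed (affine_frame c0 c1 c2 -` E)"
  using assms unfolding meet_closed_def
  by (simp add: line_meet_affine_frame det2_affine_frame)

definition nondegenerate_quad :: "pt \<Rightarrow> pt \<Rightarrow> pt \<Rightarrow> pt \<Rightarrow> bool" where
  "nondegenerate_quad a b c d \<longleftrightarrow>
     det2 (b - a) (c - a) \<noteq> 0 \<and> det2 (b - a) (d - a) \<noteq> 0 \<and> det2 (c - a) (d - a) \<noteq> 0 \<and>
     det2 (c - b) (d - b) \<noteq> 0 \<and>
     det2 (b - a) (d - c) \<noteq> 0 \<and> det2 (c - a) (d - b) \<noteq> 0 \<and> det2 (d - a) (c - b) \<noteq> 0"

lemma nondegenerate_quad_affine_frame:
  assumes "det2 (c1 - c0) (c2 - c0) \<noteq> 0"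
  shows "nondegenerate_quad (affine_frame c0 c1 c2 a) (affine_frame c0 c1 c2 b)
      (affine_frame c0 c1 c2 c) (affine_frame c0 c1 c2 d) \<longleftrightarrow> nondegenerate_quad a b c d"
  using assms by (simp add: nondegenerate_quad_def det2_affine_frame)

lemma nondegenerate_quad_std:
  "nondegenerate_quad (0, 0) (1, 0) (0, 1) (p, q) \<longleftrightarrow>
     p \<noteq> 0 \<and> q \<noteq> 0 \<and> 1 - p - q \<noteq> 0 \<and> p \<noteq> 1 \<and> q \<noteq> 1 \<and> p + q \<noteq> 0"
  by (auto simp: nondegenerate_quad_def det2_def algebra_simps)

lemma general_positionD:
  assumes "general_position c"
  shows general_position_inj: "\<And>i j. i < 4 \<Longrightarrow> j < 4 \<Longrightarrow> i \<noteq> j \<Longrightarrow> c i \<noteq> c j"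
    and general_position_triangle: "\<And>i j k. i < 4 \<Longrightarrow> j < 4 \<Longrightarrow> k < 4 \<Longrightarrow> i \<noteq> j \<Longrightarrow> j \<noteq> k \<Longrightarrow> i \<noteq> k
      \<Longrightarrow> det2 (c j - c i) (c k - c i) \<noteq> 0"
    and general_position_sides: "\<And>i j k l. i < 4 \<Longrightarrow> j < 4 \<Longrightarrow> k < 4 \<Longrightarrow> l < 4 \<Longrightarrow> i \<noteq> j \<Longrightarrow> k \<noteq> l
      \<Longrightarrow> {i, j} \<noteq> {k, l} \<Longrightarrow> det2 (c j - c i) (c l - c k) \<noteq> 0"
proof -
  note gp = assms[unfolded general_position_def]
  show inj: "\<And>i j. i < 4 \<Longrightarrow> j < 4 \<Longrightarrow> i \<noteq> j \<Longrightarrow> c i \<noteq> c j"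
    using gp[THEN conjunct1] by (auto simp: inj_on_def)
  show "det2 (c j - c i) (c k - c i) \<noteq> 0"
    if "i < 4" "j < 4" "k < 4" "i \<noteq> j" "j \<noteq> k" "i \<noteq> k" for i j k
    using gp[THEN conjunct2, THEN conjunct1, rule_format, of i j k] that
    by (simp add: collinear_iff_det2)
  show "det2 (c j - c i) (c l - c k) \<noteq> 0"
    if "i < 4" "j < 4" "k < 4" "l < 4" "i \<noteq> j" "k \<noteq> l" "{i, j} \<noteq> {k, l}" for i j k l
    using gp[THEN conjunct2, THEN conjunct2, rule_format, of i j k l] that inj[of i j] inj[of k l]
    by (simp add: parallel_line_through_iff)
qed

lemma general_positionI:
  assumes inj: "\<And>i j. i < 4 \<Longrightarrow> j < 4 \<Longrightarrow> i \<noteq> j \<Longrightarrow> c i \<noteq> c j"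
    and triangle: "\<And>i j k. i < 4 \<Longrightarrow> j < 4 \<Longrightarrow> k < 4 \<Longrightarrow> i \<noteq> j \<Longrightarrow> j \<noteq> k \<Longrightarrow> i \<noteq> k
      \<Longrightarrow> det2 (c j - c i) (c k - c i) \<noteq> 0"
    and sides: "\<And>i j k l. i < 4 \<Longrightarrow> j < 4 \<Longrightarrow> k < 4 \<Longrightarrow> l < 4 \<Longrightarrow> i \<noteq> j \<Longrightarrow> k \<noteq> l
      \<Longrightarrow> {i, j} \<noteq> {k, l} \<Longrightarrow> det2 (c j - c i) (c l - c k) \<noteq> 0"
  shows "general_position c"
  unfolding general_position_def
proof (intro conjI allI impI)
  show "inj_on c {..<4}" using inj by (auto simp: inj_on_def)
next
  fix i j k :: nat
  assume "i < 4" "j < 4" "k < 4" "i \<noteq> j \<and> j \<noteq> k \<and> i \<noteq> k"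
  then show "\<not> collinear {c i, c j, c k}" using triangle by (simp add: collinear_iff_det2)
next
  fix i j k l :: nat
  assume "i < 4" "j < 4" "k < 4" "l < 4" "i \<noteq> j \<and> k \<noteq> l \<and> {i, j} \<noteq> {k, l}"
  then show "\<not> parallel (line_through (c i) (c j)) (line_through (c k) (c l))"
    using sides inj by (simp add: parallel_line_through_iff)
qed

definition std_quad :: "real \<Rightarrow> real \<Rightarrow> nat \<Rightarrow> pt" where
  "std_quad p q i = (if i = 0 then (0, 0) else if i = 1 then (1, 0) else if i = 2 then (0, 1) else (p, q))"

lemma less_4_cases: "(i::nat) < 4 \<Longrightarrow> i = 0 \<or> i = 1 \<or> i = 2 \<or> i = 3"
  by auto

lemma general_position_std_quad:
  assumes "nondegenerate_quad (0, 0) (1, 0) (0, 1) (p, q)"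
  shows "general_position (std_quad p q)"
proof -
  have pq: "p \<noteq> 0" "q \<noteq> 0" "p + q \<noteq> 1" "p \<noteq> 1" "q \<noteq> 1" "p + q \<noteq> 0"
    using assms by (simp_all add: nondegenerate_quad_std)
  note P = std_quad_def det2_def
  have ne: "std_quad p q i \<noteq> std_quad p q j" if "i < 4" "j < 4" "i \<noteq> j" for i j
    using less_4_cases[OF that(1)] less_4_cases[OF that(2)] that(3) pq
    by (auto simp: std_quad_def)
  have tri: "det2 (std_quad p q j - std_quad p q i) (std_quad p q k - std_quad p q i) \<noteq> 0"
    if "i < 4" "j < 4" "k < 4" "i \<noteq> j" "j \<noteq> k" "i \<noteq> k" for i j k
    using less_4_cases[OF that(1)] less_4_cases[OF that(2)] less_4_cases[OF that(3)] that(4-6) pq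
    by (elim disjE) (simp_all add: P algebra_simps)
  have quad: "det2 (std_quad p q j - std_quad p q i) (std_quad p q l - std_quad p q k) \<noteq> 0"
    if "i < 4" "j < 4" "k < 4" "l < 4" "i \<noteq> j" "k \<noteq> l" "{i, j} \<noteq> {k, l}" for i j k l
    using less_4_cases[OF that(1)] less_4_cases[OF that(2)] less_4_cases[OF that(3)]
      less_4_cases[OF that(4)] that(5-7) pq
    by (elim disjE) (simp_all add: P algebra_simps doubleton_eq_iff)
  show ?thesis using general_positionI[OF ne tri quad] .
qed

lemma affine_frame_eq_iff:
  assumes "det2 (c1 - c0) (c2 - c0) \<noteq> 0"
  shows "affine_frame c0 c1 c2 a = affine_frame c0 c1 c2 b \<longleftrightarrow> a = b"
proof
  assume "affine_frame c0 c1 c2 a = affine_frame c0 c1 c2 b"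
  then have "det2 (a - b) ((0, 1) - (0, 0)) = 0" "det2 ((1, 0) - (0, 0)) (a - b) = 0"
    using det2_affine_frame[of c0 c1 c2 a b "(0, 1)" "(0, 0)"]
      det2_affine_frame[of c0 c1 c2 "(1, 0)" "(0, 0)" a b] assms by simp_all
  then show "a = b" by (simp add: det2_def prod_eq_iff)
qed simp

lemma general_position_affine_frame:
  assumes "det2 (c1 - c0) (c2 - c0) \<noteq> 0" "general_position c"
  shows "general_position (affine_frame c0 c1 c2 \<circ> c)"
  using general_positionD[OF assms(2)] assms(1)
  by (intro general_positionI) (simp_all add: det2_affine_frame affine_frame_eq_iff)

lemma general_position_imp_nondegenerate_quad:
  assumes "general_position c"
  shows "nondegenerate_quad (c 0) (c 1) (c 2) (c 3)"
  unfolding nondegenerate_quad_def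
  using general_position_triangle[OF assms, of 0 1 2] general_position_triangle[OF assms, of 0 1 3]
    general_position_triangle[OF assms, of 0 2 3] general_position_triangle[OF assms, of 1 2 3]
    general_position_sides[OF assms, of 0 1 2 3] general_position_sides[OF assms, of 0 2 1 3]
    general_position_sides[OF assms, of 0 3 1 2]
  by (simp add: doubleton_eq_iff)

lemma nondegenerate_quad_imp_general_position:
  assumes "nondegenerate_quad c0 c1 c2 c3"
  obtains c where "general_position c" "c ` {..<4} = {c0, c1, c2, c3}"
proof -
  have \<delta>: "det2 (c1 - c0) (c2 - c0) \<noteq> 0" using assms by (simp add: nondegenerate_quad_def)
  obtain x where x: "affine_frame c0 c1 c2 x = c3" using affine_frame_surj[OF \<delta>] by blast
  have "nondegenerate_quad (0, 0) (1, 0) (0, 1) (fst x, snd x)"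
    using assms x nondegenerate_quad_affine_frame[OF \<delta>, of "(0, 0)" "(1, 0)" "(0, 1)" x] by simp
  then have "general_position (affine_frame c0 c1 c2 \<circ> std_quad (fst x) (snd x))"
    by (intro general_position_affine_frame[OF \<delta>] general_position_std_quad)
  moreover have "{..<4::nat} = {0, 1, 2, 3}" by auto
  then have "(affine_frame c0 c1 c2 \<circ> std_quad (fst x) (snd x)) ` {..<4} = {c0, c1, c2, c3}"
    using x by (simp add: std_quad_def)
  ultimately show ?thesis using that by blast
qed

theorem meet_closed_dense:
  assumes "meet_closed D" "c0 \<in> D" "c1 \<in> D" "c2 \<in> D" "c3 \<in> D" "nondegenerate_quad c0 c1 c2 c3"
  shows "closure D = UNIV"
proof -
  let ?T = "affine_frame c0 c1 c2"
  have \<delta>: "det2 (c1 - c0) (c2 - c0) \<noteq> 0" using assms(6) by (simp add: nondegenerate_quad_def)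
  obtain p q where pq: "?T (p, q) = c3" using affine_frame_surj[OF \<delta>] by (metis surj_pair)
  have "continuous_on UNIV ?T" unfolding affine_frame_def by (intro continuous_intros)
  then have closed: "closed (?T -` closure D)" by (simp add: closed_vimage)
  have meet: "meet_closed (?T -` closure D)"
    using meet_closed_vimage_affine_frame[OF meet_closed_closure[OF assms(1)] \<delta>] .
  have frame: "(0, 0) \<in> ?T -` closure D" "(1, 0) \<in> ?T -` closure D" "(0, 1) \<in> ?T -` closure D"
      "(p, q) \<in> ?T -` closure D"
    using assms(2-5) pq closure_subset by auto
  have "nondegenerate_quad (0, 0) (1, 0) (0, 1) (p, q)"
    using assms(6) pq nondegenerate_quad_affine_frame[OF \<delta>, of "(0, 0)" "(1, 0)" "(0, 1)" "(p, q)"] by simp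
  then have "p \<noteq> 0" "q \<noteq> 0" "1 - p - q \<noteq> 0" "p \<noteq> 1" "q \<noteq> 1" "p + q \<noteq> 0"
    by (simp_all add: nondegenerate_quad_std)
  then have "?T -` closure D = UNIV" by (rule closed_meet_closed_eq_UNIV[OF closed meet frame])
  then show ?thesis by (metis UNIV_I affine_frame_surj[OF \<delta>] subset_antisym subsetI vimageE)
qed


lemma det2_line_eq_hyperplane:
  "{x. det2 (x - b) d = 0} = {x. (snd d, - fst d) \<bullet> x = (snd d, - fst d) \<bullet> b}"
  by (auto simp: det2_def inner_prod_def algebra_simps)

lemma closed_det2_line: "closed {x. det2 (x - b) d = 0}"
  unfolding det2_line_eq_hyperplane by (rule closed_hyperplane)

lemma interior_det2_line:
  assumes "d \<noteq> 0"
  shows "interior {x. det2 (x - b) d = 0} = {}"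
  unfolding det2_line_eq_hyperplane
  by (rule interior_hyperplane) (use assms in \<open>cases d, auto simp: zero_prod_def\<close>)

lemma dense_avoids_lines:
  assumes "closure \<Sigma> = UNIV" "finite F" "\<And>b d. (b, d) \<in> F \<Longrightarrow> d \<noteq> 0"
  obtains x where "x \<in> \<Sigma>" "\<And>b d. (b, d) \<in> F \<Longrightarrow> det2 (x - b) d \<noteq> 0"
proof -
  define N where "N = (\<Union>(b, d)\<in>F. {x. det2 (x - b) d = 0})"
  have "closed N" unfolding N_def using assms(2) closed_det2_line by auto
  moreover have "interior N = {}"
    unfolding N_def using assms(2,3)
  proof (induction F rule: finite_induct)
    case (insert bd F)
    obtain b d where bd: "bd = (b, d)" by (metis surj_pair)
    have "interior ({x. det2 (x - b) d = 0} \<union> (\<Union>(b, d)\<in>F. {x. det2 (x - b) d = 0}))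
        = interior {x. det2 (x - b) d = 0}"
      by (rule interior_closed_Un_empty_interior[OF closed_det2_line]) (use insert in auto)
    also have "\<dots> = {}" using insert.prems[of b d] bd by (intro interior_det2_line) simp
    finally show ?case by (simp add: bd)
  qed simp
  then have "N \<noteq> UNIV" by (metis interior_UNIV UNIV_not_empty)
  then have "- N \<noteq> {}" by blast
  ultimately have "- N \<inter> \<Sigma> \<noteq> {}"
    using open_Int_closure_eq_empty[of "- N" \<Sigma>] assms(1) by (auto simp: open_Compl)
  then show ?thesis using that by (auto simp: N_def)
qed

lemma dense_avoids_line:
  assumes "closure \<Sigma> = UNIV" "d \<noteq> 0"
  obtains x where "x \<in> \<Sigma>" "det2 (x - b) d \<noteq> 0"
proof -
  have "\<exists>x\<in>\<Sigma>. det2 (x - b) d \<noteq> 0"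
  proof (rule dense_avoids_lines[OF assms(1), of "{(b, d)}"])
    show "d' \<noteq> 0" if "(b', d') \<in> {(b, d)}" for b' d' using that assms(2) by simp
  qed auto
  then show ?thesis using that by blast
qed

lemma dense_nondegenerate_quad:
  assumes "closure \<Sigma> = UNIV"
  obtains c0 c1 c2 c3 where "c0 \<in> \<Sigma>" "c1 \<in> \<Sigma>" "c2 \<in> \<Sigma>" "c3 \<in> \<Sigma>" "nondegenerate_quad c0 c1 c2 c3"
proof -
  have "\<Sigma> \<noteq> {}" using assms by auto
  then obtain c0 where c0: "c0 \<in> \<Sigma>" by blast
  have "(1, 0) \<noteq> (0 :: pt)" by (simp add: zero_prod_def)
  then obtain c1 where c1: "c1 \<in> \<Sigma>" "det2 (c1 - c0) (1, 0) \<noteq> 0"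
    using dense_avoids_line[OF assms] by blast
  then have c10: "c1 - c0 \<noteq> 0" by auto
  then obtain c2 where c2: "c2 \<in> \<Sigma>" "det2 (c2 - c0) (c1 - c0) \<noteq> 0"
    using dense_avoids_line[OF assms] by blast
  then have c20: "c2 - c0 \<noteq> 0" and c21: "c2 - c1 \<noteq> 0" by auto
  let ?F = "{(c0, c1 - c0), (c0, c2 - c0), (c1, c2 - c1), (c2, c1 - c0), (c1, c2 - c0), (c0, c2 - c1)}"
  obtain c3 where c3: "c3 \<in> \<Sigma>" "\<And>b d. (b, d) \<in> ?F \<Longrightarrow> det2 (c3 - b) d \<noteq> 0"
  proof (rule dense_avoids_lines[OF assms, of ?F])
    show "d \<noteq> 0" if "(b, d) \<in> ?F" for b d using that c10 c20 c21 by auto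
  qed (simp_all add: that)
  have c3': "det2 d (c3 - b) \<noteq> 0" if "(b, d) \<in> ?F" for b d
    using c3(2)[OF that] det2_commute[of d] by simp
  have "nondegenerate_quad c0 c1 c2 c3"
    unfolding nondegenerate_quad_def
    using c2(2) det2_commute[of "c2 - c0" "c1 - c0"] c3(2)[of c0 "c2 - c1"]
      c3'[of c0 "c1 - c0"] c3'[of c0 "c2 - c0"] c3'[of c1 "c2 - c1"] c3'[of c2 "c1 - c0"]
      c3'[of c1 "c2 - c0"]
    by simp
  with c0 c1(1) c2(1) c3(1) show ?thesis by (rule that)
qed

section \<open>The general algorithm\<close>

definition lines_of :: "pt set \<Rightarrow> pt set set" where
  "lines_of S = {line_through p q | p q. p \<in> S \<and> q \<in> S \<and> p \<noteq> q}"

lemma line_through_in_lines_of: "p \<in> S \<Longrightarrow> q \<in> S \<Longrightarrow> p \<noteq> q \<Longrightarrow> line_through p q \<in> lines_of S"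
  unfolding lines_of_def by blast

lemma lines_ofE:
  assumes "L \<in> lines_of S"
  obtains p q where "p \<in> S" "q \<in> S" "p \<noteq> q" "L = line_through p q"
  using assms unfolding lines_of_def by blast

lemma lines_of_mono:
  assumes "S \<subseteq> T"
  shows "lines_of S \<subseteq> lines_of T"
proof
  fix L assume "L \<in> lines_of S"
  then obtain p q where "p \<in> S" "q \<in> S" "p \<noteq> q" "L = line_through p q" by (rule lines_ofE)
  then show "L \<in> lines_of T" using assms line_through_in_lines_of by blast
qed

lemma alg_Suc:
  "snd (alg A Ls Gs c (Suc k)) = snd (alg A Ls Gs c k) \<union> lines_of (fst (alg A Ls Gs c k))"
  "fst (alg A Ls Gs c (Suc k)) = fst (alg A Ls Gs c k)
     \<union> {x. \<exists>L1\<in>snd (alg A Ls Gs c (Suc k)). \<exists>L2\<in>snd (alg A Ls Gs c (Suc k)).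
          L1 \<noteq> L2 \<and> \<not> parallel L1 L2 \<and> x \<in> L1 \<inter> L2}
     \<union> {x. \<exists>L\<in>snd (alg A Ls Gs c (Suc k)). \<exists>g\<in>Gs. x isolated_in (L \<inter> g)}"
  by (simp_all add: Let_def lines_of_def)

declare alg.simps(2) [simp del]

lemma incseq_alg: "incseq (\<lambda>k. fst (alg A Ls Gs c k))"
  by (rule incseq_SucI) (unfold alg_Suc(2), blast)

lemma alg_lines_given: "Ls \<subseteq> snd (alg A Ls Gs c k)"
  by (induction k) (auto simp: alg_Suc(1))

lemma incseq_finite_subset_UN:
  fixes S :: "nat \<Rightarrow> 'a set"
  assumes "incseq S" "finite F" "F \<subseteq> (\<Union>k. S k)"
  obtains k where "F \<subseteq> S k"
proof -
  from assms(2,3) have "\<exists>k. F \<subseteq> S k"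
  proof (induction F rule: finite_induct)
    case (insert x F)
    then obtain k m where "F \<subseteq> S k" "x \<in> S m" by auto
    then have "insert x F \<subseteq> S (max k m)"
      using monoD[OF assms(1), of k "max k m"] monoD[OF assms(1), of m "max k m"] by auto
    then show ?case by blast
  qed simp
  then show ?thesis using that by blast
qed

lemma alg_line_through:
  "b1 \<in> fst (alg A Ls Gs c k) \<Longrightarrow> b2 \<in> fst (alg A Ls Gs c k) \<Longrightarrow> b1 \<noteq> b2 \<Longrightarrow>
    line_through b1 b2 \<in> snd (alg A Ls Gs c (Suc k))"
  unfolding alg_Suc(1) lines_of_def by blast

lemma alg_meet:
  "L1 \<in> snd (alg A Ls Gs c (Suc k)) \<Longrightarrow> L2 \<in> snd (alg A Ls Gs c (Suc k)) \<Longrightarrow> L1 \<noteq> L2 \<Longrightarrow>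
    \<not> parallel L1 L2 \<Longrightarrow> x \<in> L1 \<Longrightarrow> x \<in> L2 \<Longrightarrow> x \<in> fst (alg A Ls Gs c (Suc k))"
  unfolding alg_Suc(2)[of A Ls Gs c k] by blast

lemma alg_isolated:
  "L \<in> snd (alg A Ls Gs c (Suc k)) \<Longrightarrow> g \<in> Gs \<Longrightarrow> x isolated_in (L \<inter> g) \<Longrightarrow>
    x \<in> fst (alg A Ls Gs c (Suc k))"
  unfolding alg_Suc(2)[of A Ls Gs c k] by blast

lemma alg_isolated_given_line:
  assumes "L \<in> Ls" "is_line L" "b1 \<in> fst (alg A Ls Gs c k)" "b2 \<in> fst (alg A Ls Gs c k)" "b1 \<noteq> b2"
    and iso: "x isolated_in (line_through b1 b2 \<inter> L)"
  shows "x \<in> fst (alg A Ls Gs c (Suc k))"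
proof -
  obtain p q where pq: "p \<noteq> q" "L = line_through p q" using assms(2) unfolding is_line_def by blast
  have x: "x \<in> line_through b1 b2" "x \<in> L" using iso by (auto simp: isolated_in_def)
  have "det2 (b2 - b1) (q - p) \<noteq> 0" using iso pq isolated_in_line_through_inter[OF assms(5) pq(1)] by blast
  then have "\<not> parallel (line_through b1 b2) L"
    using parallel_line_through_iff[OF assms(5) pq(1)] pq(2) by simp
  moreover from this have "line_through b1 b2 \<noteq> L" using parallel_refl by metis
  ultimately show ?thesis
    using alg_meet[OF alg_line_through[OF assms(3-5)] alg_lines_given[THEN subsetD, OF assms(1)] _ _ x]
    by blast
qed

lemma alg_union_admissible:
  assumes lines: "\<forall>L\<in>Ls. is_line L" and gp: "general_position c"
  shows "admissible A Ls Gs (\<Union>k. fst (alg A Ls Gs c k))"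
proof -
  define \<Sigma> where "\<Sigma> = (\<Union>k. fst (alg A Ls Gs c k))"
  have stage: "\<exists>k. F \<subseteq> fst (alg A Ls Gs c k)" if "finite F" "F \<subseteq> \<Sigma>" for F
    using incseq_finite_subset_UN[OF incseq_alg that[unfolded \<Sigma>_def]] by blast
  have line_inter: "\<forall>b1\<in>\<Sigma>. \<forall>b2\<in>\<Sigma>. \<forall>b3\<in>\<Sigma>. \<forall>b4\<in>\<Sigma>. \<forall>x. b1 \<noteq> b2 \<and> b3 \<noteq> b4 \<and>
      line_through b1 b2 \<noteq> line_through b3 b4 \<and> \<not> parallel (line_through b1 b2) (line_through b3 b4) \<and>
      x \<in> line_through b1 b2 \<inter> line_through b3 b4 \<longrightarrow> x \<in> \<Sigma>"
  proof (intro ballI allI impI)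
    fix b1 b2 b3 b4 x
    assume "b1 \<in> \<Sigma>" "b2 \<in> \<Sigma>" "b3 \<in> \<Sigma>" "b4 \<in> \<Sigma>"
    then obtain k where k: "b1 \<in> fst (alg A Ls Gs c k)" "b2 \<in> fst (alg A Ls Gs c k)"
      "b3 \<in> fst (alg A Ls Gs c k)" "b4 \<in> fst (alg A Ls Gs c k)"
      using stage[of "{b1, b2, b3, b4}"] by auto
    assume "b1 \<noteq> b2 \<and> b3 \<noteq> b4 \<and> line_through b1 b2 \<noteq> line_through b3 b4 \<and>
      \<not> parallel (line_through b1 b2) (line_through b3 b4) \<and> x \<in> line_through b1 b2 \<inter> line_through b3 b4"
    then have "x \<in> fst (alg A Ls Gs c (Suc k))"
      by (intro alg_meet[OF alg_line_through[OF k(1,2)] alg_line_through[OF k(3,4)]]) simp_all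
    then show "x \<in> \<Sigma>" by (auto simp: \<Sigma>_def)
  qed
  have c: "c i \<in> \<Sigma>" if "i < 4" for i
    using that unfolding \<Sigma>_def by (intro UN_I[of 0]) auto
  have dense: "closure \<Sigma> = UNIV"
    by (rule meet_closed_dense[OF line_inter[folded meet_closed_iff_line_through_inter]
      c c c c general_position_imp_nondegenerate_quad[OF gp]]) simp_all
  have "A \<subseteq> fst (alg A Ls Gs c 0)" by simp
  then have "A \<subseteq> \<Sigma>" unfolding \<Sigma>_def by blast
  moreover have "x \<in> \<Sigma>" if b: "b1 \<in> \<Sigma>" "b2 \<in> \<Sigma>" "b1 \<noteq> b2" and L: "L \<in> Ls"
    "x isolated_in (line_through b1 b2 \<inter> L)" for b1 b2 x L
  proof -
    obtain k where "b1 \<in> fst (alg A Ls Gs c k)" "b2 \<in> fst (alg A Ls Gs c k)"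
      using stage[of "{b1, b2}"] b(1,2) by auto
    then have "x \<in> fst (alg A Ls Gs c (Suc k))"
      using alg_isolated_given_line[OF L(1) _ _ _ b(3) L(2)] lines L(1) by blast
    then show ?thesis unfolding \<Sigma>_def by blast
  qed
  moreover have "x \<in> \<Sigma>" if b: "b1 \<in> \<Sigma>" "b2 \<in> \<Sigma>" "b1 \<noteq> b2" and g: "g \<in> Gs"
    "x isolated_in (line_through b1 b2 \<inter> g)" for b1 b2 x g
  proof -
    obtain k where "b1 \<in> fst (alg A Ls Gs c k)" "b2 \<in> fst (alg A Ls Gs c k)"
      using stage[of "{b1, b2}"] b(1,2) by auto
    then have "x \<in> fst (alg A Ls Gs c (Suc k))"
      using alg_isolated[OF alg_line_through g] b(3) by blast
    then show ?thesis unfolding \<Sigma>_def by blast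
  qed
  ultimately show ?thesis unfolding admissible_def \<Sigma>_def[symmetric] using dense line_inter by blast
qed

lemma admissibleD:
  assumes "admissible A Ls Gs \<Sigma>"
  shows admissible_dense: "closure \<Sigma> = UNIV"
    and admissible_points: "A \<subseteq> \<Sigma>"
    and admissible_line_inter: "\<And>b1 b2 b3 b4 x. b1 \<in> \<Sigma> \<Longrightarrow> b2 \<in> \<Sigma> \<Longrightarrow> b3 \<in> \<Sigma> \<Longrightarrow> b4 \<in> \<Sigma> \<Longrightarrow>
      b1 \<noteq> b2 \<Longrightarrow> b3 \<noteq> b4 \<Longrightarrow> line_through b1 b2 \<noteq> line_through b3 b4 \<Longrightarrow>
      \<not> parallel (line_through b1 b2) (line_through b3 b4) \<Longrightarrow>
      x \<in> line_through b1 b2 \<Longrightarrow> x \<in> line_through b3 b4 \<Longrightarrow> x \<in> \<Sigma>"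
    and admissible_isolated_line: "\<And>b1 b2 L x. b1 \<in> \<Sigma> \<Longrightarrow> b2 \<in> \<Sigma> \<Longrightarrow> b1 \<noteq> b2 \<Longrightarrow> L \<in> Ls \<Longrightarrow>
      x isolated_in (line_through b1 b2 \<inter> L) \<Longrightarrow> x \<in> \<Sigma>"
    and admissible_isolated_curve: "\<And>b1 b2 g x. b1 \<in> \<Sigma> \<Longrightarrow> b2 \<in> \<Sigma> \<Longrightarrow> b1 \<noteq> b2 \<Longrightarrow> g \<in> Gs \<Longrightarrow>
      x isolated_in (line_through b1 b2 \<inter> g) \<Longrightarrow> x \<in> \<Sigma>"
proof -
  note adm = assms[unfolded admissible_def]
  show "closure \<Sigma> = UNIV" using adm by (rule conjunct1)
  show "A \<subseteq> \<Sigma>" using adm[THEN conjunct2] by (rule conjunct1)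
  show "x \<in> \<Sigma>" if "b1 \<in> \<Sigma>" "b2 \<in> \<Sigma>" "b3 \<in> \<Sigma>" "b4 \<in> \<Sigma>" "b1 \<noteq> b2" "b3 \<noteq> b4"
    "line_through b1 b2 \<noteq> line_through b3 b4" "\<not> parallel (line_through b1 b2) (line_through b3 b4)"
    "x \<in> line_through b1 b2" "x \<in> line_through b3 b4" for b1 b2 b3 b4 x
    using adm[THEN conjunct2, THEN conjunct2, THEN conjunct1, rule_format, OF that(1-4), of x] that(5-10)
    by blast
  note iso = adm[THEN conjunct2, THEN conjunct2, THEN conjunct2, rule_format]
  show "x \<in> \<Sigma>" if "b1 \<in> \<Sigma>" "b2 \<in> \<Sigma>" "b1 \<noteq> b2" "L \<in> Ls"
    "x isolated_in (line_through b1 b2 \<inter> L)" for b1 b2 L x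
    using iso[OF that(1-3), THEN conjunct1, rule_format, OF that(4,5)] .
  show "x \<in> \<Sigma>" if "b1 \<in> \<Sigma>" "b2 \<in> \<Sigma>" "b1 \<noteq> b2" "g \<in> Gs"
    "x isolated_in (line_through b1 b2 \<inter> g)" for b1 b2 g x
    using iso[OF that(1-3), THEN conjunct2, rule_format, OF that(4,5)] .
qed

lemma admissible_spans_given_line:
  assumes adm: "admissible A Ls Gs \<Sigma>" and L: "L \<in> Ls" "is_line L"
  shows "L \<in> lines_of \<Sigma>"
proof -
  obtain p q where pq: "p \<noteq> q" "L = line_through p q" using L(2) unfolding is_line_def by blast
  note dense = admissible_dense[OF adm]
  have on_L: "x \<in> \<Sigma>" if "b \<in> \<Sigma>" "b' \<in> \<Sigma>" "det2 (b' - b) (q - p) \<noteq> 0" "x = line_meet b b' p q" for b b' x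
  proof -
    have "b \<noteq> b'" using that(3) by auto
    moreover have "x isolated_in (line_through b b' \<inter> L)"
      using that pq isolated_in_line_through_inter[OF \<open>b \<noteq> b'\<close> pq(1)] by simp
    ultimately show ?thesis using admissible_isolated_line[OF adm that(1,2)] L(1) by blast
  qed
  have "q - p \<noteq> 0" using pq(1) by simp
  then obtain b1 where b1: "b1 \<in> \<Sigma>" "det2 (b1 - p) (q - p) \<noteq> 0" using dense_avoids_line[OF dense] by blast
  obtain b2 where b2: "b2 \<in> \<Sigma>" "det2 (b2 - b1) (q - p) \<noteq> 0"
    using dense_avoids_line[OF dense \<open>q - p \<noteq> 0\<close>] by blast
  then have "b2 - b1 \<noteq> 0" by auto
  obtain b3 where b3: "b3 \<in> \<Sigma>" "\<And>b d. (b, d) \<in> {(b1, q - p), (b1, b2 - b1)} \<Longrightarrow> det2 (b3 - b) d \<noteq> 0"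
  proof (rule dense_avoids_lines[OF dense, of "{(b1, q - p), (b1, b2 - b1)}"])
    show "d \<noteq> 0" if "(b, d) \<in> {(b1, q - p), (b1, b2 - b1)}" for b d
      using that \<open>q - p \<noteq> 0\<close> \<open>b2 - b1 \<noteq> 0\<close> by auto
  qed (simp_all add: that)
  define x1 where "x1 = line_meet b1 b2 p q"
  define x2 where "x2 = line_meet b1 b3 p q"
  have d13: "det2 (b3 - b1) (q - p) \<noteq> 0" and d312: "det2 (b3 - b1) (b2 - b1) \<noteq> 0" using b3(2) by auto
  have x1: "det2 (x1 - b1) (b2 - b1) = 0" "det2 (x1 - p) (q - p) = 0"
    using line_meet_iff[OF b2(2), of x1] unfolding x1_def by simp_all
  have x2: "det2 (x2 - b1) (b3 - b1) = 0" "det2 (x2 - p) (q - p) = 0"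
    using line_meet_iff[OF d13, of x2] unfolding x2_def by simp_all
  have "x1 \<noteq> x2"
  proof
    assume "x1 = x2"
    have "x1 - b1 \<noteq> 0" using x1(2) b1(2) by auto
    moreover have "det2 (b2 - b1) (x1 - b1) = 0" "det2 (b3 - b1) (x1 - b1) = 0"
      using x1(1) x2(1) \<open>x1 = x2\<close> det2_commute by (metis neg_equal_0_iff_equal)+
    ultimately have "det2 (b3 - b1) (b2 - b1) = 0"
      using det2_same_direction[OF \<open>b2 - b1 \<noteq> 0\<close> \<open>x1 - b1 \<noteq> 0\<close>] by simp
    then show False using d312 by simp
  qed
  moreover have "x1 \<in> L" "x2 \<in> L" using x1(2) x2(2) pq by (simp_all add: mem_line_through_iff)
  ultimately have "L = line_through x1 x2" using line_through_eqI[OF pq(1)] pq(2) by simp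
  moreover have "x1 \<in> \<Sigma>" "x2 \<in> \<Sigma>" using on_L b1(1) b2 b3(1) d13 by (simp_all add: x1_def x2_def)
  ultimately show ?thesis using \<open>x1 \<noteq> x2\<close> by (simp add: line_through_in_lines_of)
qed

lemma alg_subset_admissible:
  assumes adm: "admissible A Ls Gs \<Sigma>" and lines: "\<forall>L\<in>Ls. is_line L" and c: "c ` {..<4} \<subseteq> \<Sigma>"
  shows "fst (alg A Ls Gs c k) \<subseteq> \<Sigma>"
proof -
  have inter: "x \<in> \<Sigma>"
    if h: "L1 \<in> lines_of \<Sigma>" "L2 \<in> lines_of \<Sigma>" "L1 \<noteq> L2" "\<not> parallel L1 L2" "x \<in> L1" "x \<in> L2"
    for L1 L2 x
  proof -
    obtain b1 b2 where b12: "b1 \<in> \<Sigma>" "b2 \<in> \<Sigma>" "b1 \<noteq> b2" "L1 = line_through b1 b2"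
      using h(1) by (rule lines_ofE)
    obtain b3 b4 where b34: "b3 \<in> \<Sigma>" "b4 \<in> \<Sigma>" "b3 \<noteq> b4" "L2 = line_through b3 b4"
      using h(2) by (rule lines_ofE)
    show ?thesis
      using admissible_line_inter[OF adm b12(1,2) b34(1,2) b12(3) b34(3)] h(3-6) b12(4) b34(4) by blast
  qed
  have iso: "x \<in> \<Sigma>" if h: "L \<in> lines_of \<Sigma>" "g \<in> Gs" "x isolated_in (L \<inter> g)" for L g x
  proof -
    obtain b1 b2 where b12: "b1 \<in> \<Sigma>" "b2 \<in> \<Sigma>" "b1 \<noteq> b2" "L = line_through b1 b2"
      using h(1) by (rule lines_ofE)
    show ?thesis using admissible_isolated_curve[OF adm b12(1-3) h(2)] h(3) b12(4) by blast
  qed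
  have "fst (alg A Ls Gs c k) \<subseteq> \<Sigma> \<and> snd (alg A Ls Gs c k) \<subseteq> lines_of \<Sigma>"
  proof (induction k)
    case 0
    have "Ls \<subseteq> lines_of \<Sigma>" using admissible_spans_given_line[OF adm] lines by blast
    then show ?case using admissible_points[OF adm] c by simp
  next
    case (Suc k)
    then have lines_Suc: "snd (alg A Ls Gs c (Suc k)) \<subseteq> lines_of \<Sigma>"
      using lines_of_mono[of "fst (alg A Ls Gs c k)" \<Sigma>] by (simp add: alg_Suc(1))
    have "fst (alg A Ls Gs c (Suc k)) \<subseteq> \<Sigma>"
      unfolding alg_Suc(2)[of A Ls Gs c k]
    proof (intro Un_least subsetI)
      fix x
      assume "x \<in> {x. \<exists>L1\<in>snd (alg A Ls Gs c (Suc k)). \<exists>L2\<in>snd (alg A Ls Gs c (Suc k)).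
          L1 \<noteq> L2 \<and> \<not> parallel L1 L2 \<and> x \<in> L1 \<inter> L2}"
      then show "x \<in> \<Sigma>" using inter lines_Suc by blast
    next
      fix x
      assume "x \<in> {x. \<exists>L\<in>snd (alg A Ls Gs c (Suc k)). \<exists>g\<in>Gs. x isolated_in (L \<inter> g)}"
      then show "x \<in> \<Sigma>" using iso lines_Suc by blast
    qed (use Suc in blast)
    with lines_Suc show ?case by blast
  qed
  then show ?thesis by blast
qed

theorem mainTheorem12:
  fixes A :: "pt set" and Ls :: "pt set set" and Gs :: "pt set set" and a :: pt
  assumes "finite A" and "finite Ls" and "finite Gs"
    and "\<forall>L\<in>Ls. is_line L"
  shows "non_constructible A Ls Gs a \<noteq>
           (\<forall>c. general_position c \<longrightarrow> (\<exists>k. a \<in> fst (alg A Ls Gs c k)))"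
proof -
  have "\<exists>c. general_position c \<and> (\<forall>k. a \<notin> fst (alg A Ls Gs c k))"
    if nc: "non_constructible A Ls Gs a"
  proof -
    obtain \<Sigma> where adm: "admissible A Ls Gs \<Sigma>" and "a \<notin> \<Sigma>"
      using nc unfolding non_constructible_def by blast
    from adm have "closure \<Sigma> = UNIV" by (rule admissible_dense)
    then obtain c0 c1 c2 c3 where "c0 \<in> \<Sigma>" "c1 \<in> \<Sigma>" "c2 \<in> \<Sigma>" "c3 \<in> \<Sigma>" "nondegenerate_quad c0 c1 c2 c3"
      by (rule dense_nondegenerate_quad)
    moreover obtain c where "general_position c" "c ` {..<4} = {c0, c1, c2, c3}"
      using nondegenerate_quad_imp_general_position[OF \<open>nondegenerate_quad c0 c1 c2 c3\<close>] .
    ultimately have "general_position c" "c ` {..<4} \<subseteq> \<Sigma>" by auto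
    then show ?thesis using alg_subset_admissible[OF adm assms(4)] \<open>a \<notin> \<Sigma>\<close> by blast
  qed
  moreover have "\<exists>k. a \<in> fst (alg A Ls Gs c k)"
    if "\<not> non_constructible A Ls Gs a" "general_position c" for c
    using alg_union_admissible[OF assms(4) that(2)] that(1) unfolding non_constructible_def by blast
  ultimately show ?thesis by blast
qed

end
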